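(* If a Banach space $X$ has the join-lush property, then $n_L(X)=1$.
   Context: $X$ is a Banach space over $\mathbb{K}=\mathbb{R}$ or $\mathbb{C}$, $\mathbb{T}=\{\alpha\in\mathbb{K}:|\alpha|=1\}$. For $y^*\in S_{X^*}$ and $\varepsilon>0$, $S(y^*,\varepsilon)=\{z\in B_X:\operatorname{Re}y^*(z)>1-\varepsilon\}$. $X$ has the join-lush property if for each $x,y\in S_X$ and $\varepsilon>0$ there exist $y^*\in S_{X^*}$ with $y\in S=S(y^*,\varepsilon)$, $x_1,x_2\in S$, $\lambda\in[0,1]$ and $\alpha_1,\alpha_2\in\mathbb{T}$ such that $\|x-(\lambda\alpha_1x_1+(1-\lambda)\alpha_2x_2)\|<\varepsilon$. $\mathrm{Lip}_0(X)$ is the set of Lipschitz maps $T:X\to X$ with $T(0)=0$, with $\|T\|_L=\sup\{\|Tx-Ty\|/\|x-y\|: x\neq y\}$; $D(x)=\{x^*\in X^*: x^*(x)=\|x^*\|\|x\|=\|x\|^2\}$; $\omega(T)=\sup\{|f(Tx-Ty)|/\|x-y\|^2: x\neq y,\ f\in D(x-y)\}$; $n_L(X)=\inf\{\omega(T): T\in\mathrm{Lip}_0(X),\ \|T\|_L=1\}$. *)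

theory Defs
  imports "HOL-Analysis.Analysis"
begin

text \<open>A Banach space over K = R or C is modelled as a real Banach space type 'a
  together with a scalar set K (either the reals inside the complex numbers, or all of C)
  and a scalar multiplication sm :: complex => 'a => 'a extending the real one.\<close>

definition complex_structure :: "(complex \<Rightarrow> 'a::real_normed_vector \<Rightarrow> 'a) \<Rightarrow> bool" where
  "complex_structure sm \<longleftrightarrow>
     (\<forall>r x. sm (complex_of_real r) x = r *\<^sub>R x) \<and>
     (\<forall>a b x. sm (a + b) x = sm a x + sm b x) \<and>
     (\<forall>a x y. sm a (x + y) = sm a x + sm a y) \<and>
     (\<forall>a b x. sm (a * b) x = sm a (sm b x)) \<and>
     (\<forall>a x. norm (sm a x) = cmod a * norm x)"

definition scalar_setting :: "complex set \<Rightarrow> (complex \<Rightarrow> 'a::real_normed_vector \<Rightarrow> 'a) \<Rightarrow> bool" where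
  "scalar_setting K sm \<longleftrightarrow>
     (K = \<real> \<and> (\<forall>c x. sm c x = Re c *\<^sub>R x)) \<or> (K = UNIV \<and> complex_structure sm)"

definition dual :: "complex set \<Rightarrow> (complex \<Rightarrow> 'a::real_normed_vector \<Rightarrow> 'a) \<Rightarrow> ('a \<Rightarrow> complex) set" where
  "dual K sm = {f. bounded_linear f \<and> (\<forall>x. f x \<in> K) \<and> (\<forall>c\<in>K. \<forall>x. f (sm c x) = c * f x)}"

definition unimod :: "complex set \<Rightarrow> complex set" where
  "unimod K = {a \<in> K. cmod a = 1}"

definition slice :: "('a::real_normed_vector \<Rightarrow> complex) \<Rightarrow> real \<Rightarrow> 'a set" where
  "slice ys \<epsilon> = {z. norm z \<le> 1 \<and> Re (ys z) > 1 - \<epsilon>}"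

definition join_lush :: "complex set \<Rightarrow> (complex \<Rightarrow> 'a::real_normed_vector \<Rightarrow> 'a) \<Rightarrow> bool" where
  "join_lush K sm \<longleftrightarrow>
    (\<forall>x y. norm x = 1 \<longrightarrow> norm y = 1 \<longrightarrow> (\<forall>\<epsilon>>0.
       \<exists>ys\<in>dual K sm. onorm ys = 1 \<and> y \<in> slice ys \<epsilon> \<and>
         (\<exists>x1\<in>slice ys \<epsilon>. \<exists>x2\<in>slice ys \<epsilon>. \<exists>t\<in>{0..1::real}.
            \<exists>a1\<in>unimod K. \<exists>a2\<in>unimod K.
              norm (x - (t *\<^sub>R sm a1 x1 + (1 - t) *\<^sub>R sm a2 x2)) < \<epsilon>)))"

definition Lip0 :: "('a::real_normed_vector \<Rightarrow> 'a) set" where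
  "Lip0 = {T. T 0 = 0 \<and> (\<exists>C. lipschitz_on C UNIV T)}"

definition lip_norm :: "('a::real_normed_vector \<Rightarrow> 'a) \<Rightarrow> real" where
  "lip_norm T = Sup {norm (T x - T y) / norm (x - y) | x y. x \<noteq> y}"

definition Dset :: "complex set \<Rightarrow> (complex \<Rightarrow> 'a::real_normed_vector \<Rightarrow> 'a) \<Rightarrow> 'a \<Rightarrow> ('a \<Rightarrow> complex) set" where
  "Dset K sm x = {f \<in> dual K sm. f x = complex_of_real (onorm f * norm x)
                                 \<and> onorm f * norm x = (norm x)\<^sup>2}"

definition omega :: "complex set \<Rightarrow> (complex \<Rightarrow> 'a::real_normed_vector \<Rightarrow> 'a) \<Rightarrow> ('a \<Rightarrow> 'a) \<Rightarrow> real" where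
  "omega K sm T = Sup {cmod (f (T x - T y)) / (norm (x - y))\<^sup>2 | x y f. x \<noteq> y \<and> f \<in> Dset K sm (x - y)}"

definition nL :: "complex set \<Rightarrow> (complex \<Rightarrow> 'a::real_normed_vector \<Rightarrow> 'a) \<Rightarrow> real" where
  "nL K sm = Inf {omega K sm T | T. T \<in> Lip0 \<and> lip_norm T = 1}"

end

theory Submission
  imports Defs
begin

text \<open>Let \<open>T\<close> have Lipschitz norm one; \<open>\<omega>(T) \<le> 1\<close> is immediate. Choose \<open>u \<noteq> v\<close> with
  \<open>\<parallel>T u - T v\<parallel> > (1 - \<epsilon>) \<parallel>u - v\<parallel>\<close> and apply join-lushness to the normalised vectors
  \<open>x = (u - v)/\<parallel>u - v\<parallel>\<close> and \<open>y = (T u - T v)/\<parallel>T u - T v\<parallel>\<close>: a slice functional \<open>y\<^sup>*\<close> almost norms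
  \<open>T u - T v\<close>, while \<open>x\<close> is close to \<open>\<mu> \<alpha>\<^sub>1 x\<^sub>1 + (1 - \<mu>) \<alpha>\<^sub>2 x\<^sub>2\<close> with \<open>x\<^sub>i\<close> in the slice and, after
  relabelling, \<open>\<mu> \<ge> 1/2\<close>. As \<open>T\<close> is nonexpansive, it stretches the first leg
  \<open>v \<mapsto> v + \<parallel>u - v\<parallel> \<mu> \<alpha>\<^sub>1 x\<^sub>1\<close> almost fully in the direction of \<open>y\<^sup>*\<close>. By the
  Bishop--Phelps--Bollobas theorem, \<open>y\<^sup>*\<close> and \<open>x\<^sub>1\<close> move slightly to a functional \<open>G\<close> attaining its
  norm at some \<open>z\<^sub>0\<close>; a rotated multiple of \<open>G\<close> then lies in \<open>D(p - v)\<close> for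
  \<open>p = v + \<parallel>u - v\<parallel> \<mu> \<alpha>\<^sub>1 z\<^sub>0\<close> and witnesses \<open>\<omega>(T) \<ge> 1 - \<delta>\<close>. Since the identity has Lipschitz norm
  one, the infimum \<open>n\<^sub>L(X)\<close> is taken over a nonempty set of ones.\<close>

section \<open>Hahn--Banach for sublinear functionals\<close>

definition sublinear :: "('a::real_vector \<Rightarrow> real) \<Rightarrow> bool" where
  "sublinear p \<longleftrightarrow> (\<forall>x y. p (x + y) \<le> p x + p y) \<and> (\<forall>c x. 0 \<le> c \<longrightarrow> p (c *\<^sub>R x) = c * p x)"

lemma sublinear_add: "sublinear p \<Longrightarrow> p (x + y) \<le> p x + p y"
  and sublinear_scaleR: "sublinear p \<Longrightarrow> 0 \<le> c \<Longrightarrow> p (c *\<^sub>R x) = c * p x"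
  unfolding sublinear_def by blast+

lemma sublinear_zero: "sublinear p \<Longrightarrow> p 0 = 0"
  using sublinear_scaleR[of p 0 0] by simp

text \<open>A real linear functional on a subspace, encoded by its graph so that Zorn's lemma
  applies directly to the graphs ordered by inclusion.\<close>

definition dominated_linear_graph :: "('a::real_vector \<Rightarrow> real) \<Rightarrow> ('a \<times> real) set \<Rightarrow> bool" where
  "dominated_linear_graph p G \<longleftrightarrow>
     (\<forall>x a b. (x, a) \<in> G \<longrightarrow> (x, b) \<in> G \<longrightarrow> a = b)
     \<and> (\<forall>x a y b. (x, a) \<in> G \<longrightarrow> (y, b) \<in> G \<longrightarrow> (x + y, a + b) \<in> G)
     \<and> (\<forall>x a c. (x, a) \<in> G \<longrightarrow> (c *\<^sub>R x, c * a) \<in> G)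
     \<and> (\<forall>x a. (x, a) \<in> G \<longrightarrow> a \<le> p x)"

lemma dominated_linear_graphD:
  assumes "dominated_linear_graph p G"
  shows dominated_linear_graph_unique: "(x, a) \<in> G \<Longrightarrow> (x, b) \<in> G \<Longrightarrow> a = b"
    and dominated_linear_graph_add: "(x, a) \<in> G \<Longrightarrow> (y, b) \<in> G \<Longrightarrow> (x + y, a + b) \<in> G"
    and dominated_linear_graph_scaleR: "(x, a) \<in> G \<Longrightarrow> (c *\<^sub>R x, c * a) \<in> G"
    and dominated_linear_graph_le: "(x, a) \<in> G \<Longrightarrow> a \<le> p x"
  using assms unfolding dominated_linear_graph_def by blast+

lemma dominated_linear_graph_chain_Union:
  assumes "chain\<^sub>\<subseteq> C" and "\<And>G. G \<in> C \<Longrightarrow> dominated_linear_graph p G"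
  shows "dominated_linear_graph p (\<Union>C)"
proof -
  have common: "\<exists>G\<in>C. P \<in> G \<and> Q \<in> G" if P: "P \<in> \<Union>C" and Q: "Q \<in> \<Union>C" for P Q
  proof -
    obtain G\<^sub>1 G\<^sub>2 where "G\<^sub>1 \<in> C" "G\<^sub>2 \<in> C" "P \<in> G\<^sub>1" "Q \<in> G\<^sub>2" using P Q by blast
    moreover have "G\<^sub>1 \<subseteq> G\<^sub>2 \<or> G\<^sub>2 \<subseteq> G\<^sub>1"
      using \<open>chain\<^sub>\<subseteq> C\<close> \<open>G\<^sub>1 \<in> C\<close> \<open>G\<^sub>2 \<in> C\<close> unfolding chain_subset_def by blast
    ultimately show ?thesis by blast
  qed
  show ?thesis
    unfolding dominated_linear_graph_def
  proof (intro conjI allI impI)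
    fix x a b assume "(x, a) \<in> \<Union>C" "(x, b) \<in> \<Union>C"
    then obtain G where "G \<in> C" "(x, a) \<in> G" "(x, b) \<in> G" using common by blast
    then show "a = b" using assms(2) dominated_linear_graph_unique by blast
  next
    fix x a y b assume "(x, a) \<in> \<Union>C" "(y, b) \<in> \<Union>C"
    then show "(x + y, a + b) \<in> \<Union>C" using common assms(2) dominated_linear_graph_add by blast
  next
    fix x a c assume "(x, a) \<in> \<Union>C"
    then show "(c *\<^sub>R x, c * a) \<in> \<Union>C" using assms(2) dominated_linear_graph_scaleR by blast
  next
    fix x a assume "(x, a) \<in> \<Union>C"
    then show "a \<le> p x" using assms(2) dominated_linear_graph_le by blast
  qed
qed

text \<open>The classical one-dimensional extension step: the new value \<open>\<xi>\<close> at \<open>x\<^sub>0\<close> must separate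
  the lower bounds \<open>a - p (y - x\<^sub>0)\<close> from the upper bounds \<open>p (y + x\<^sub>0) - a\<close>; sublinearity of \<open>p\<close>
  makes every lower bound smaller than every upper bound.\<close>

lemma dominated_linear_graph_extension_value:
  assumes p: "sublinear p" and G: "dominated_linear_graph p G" and "G \<noteq> {}"
  obtains \<xi> where "\<And>y a. (y, a) \<in> G \<Longrightarrow> a - p (y - x\<^sub>0) \<le> \<xi>"
    and "\<And>y a. (y, a) \<in> G \<Longrightarrow> \<xi> \<le> p (y + x\<^sub>0) - a"
proof -
  define L where "L = {a - p (y - x\<^sub>0) | y a. (y, a) \<in> G}"
  have below: "l \<le> p (y + x\<^sub>0) - a" if "l \<in> L" "(y, a) \<in> G" for l y a
  proof -
    obtain y' a' where l: "l = a' - p (y' - x\<^sub>0)" and "(y', a') \<in> G" using \<open>l \<in> L\<close> L_def by blast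
    then have "a' + a \<le> p (y' + y)"
      using dominated_linear_graph_le[OF G] dominated_linear_graph_add[OF G] that(2) by blast
    then have "a' + a \<le> p ((y' - x\<^sub>0) + (y + x\<^sub>0))" by simp
    also have "\<dots> \<le> p (y' - x\<^sub>0) + p (y + x\<^sub>0)" by (rule sublinear_add[OF p])
    finally show ?thesis using l by simp
  qed
  have "L \<noteq> {}" using \<open>G \<noteq> {}\<close> L_def by auto
  moreover obtain y a where "(y, a) \<in> G" using \<open>G \<noteq> {}\<close> by auto
  then have "bdd_above L" using below by (intro bdd_aboveI) blast
  ultimately show ?thesis
  proof (intro that)
    fix y a assume "(y, a) \<in> G"
    then show "a - p (y - x\<^sub>0) \<le> Sup L"
      using \<open>bdd_above L\<close> by (intro cSup_upper) (auto simp: L_def)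
  next
    fix y a assume "(y, a) \<in> G"
    then show "Sup L \<le> p (y + x\<^sub>0) - a"
      using \<open>L \<noteq> {}\<close> below by (intro cSup_least) auto
  qed
qed

lemma dominated_linear_graph_decomposition_unique:
  assumes G: "dominated_linear_graph p G" and x\<^sub>0: "x\<^sub>0 \<notin> fst ` G"
    and "(y, a) \<in> G" "(y', a') \<in> G" "y + t *\<^sub>R x\<^sub>0 = y' + t' *\<^sub>R x\<^sub>0"
  shows "t = t'" "a = a'"
proof -
  show "t = t'"
  proof (rule ccontr)
    assume "t \<noteq> t'"
    have "(y + (-1) *\<^sub>R y', a + (-1) * a') \<in> G"
      using dominated_linear_graph_add[OF G assms(3) dominated_linear_graph_scaleR[OF G assms(4)]] .
    then have "(y - y', a - a') \<in> G" by simp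
    then have "((1 / (t' - t)) *\<^sub>R (y - y'), (1 / (t' - t)) * (a - a')) \<in> G"
      by (rule dominated_linear_graph_scaleR[OF G])
    moreover have "y - y' = (t' - t) *\<^sub>R x\<^sub>0" using assms(5) by (simp add: algebra_simps)
    ultimately have "(x\<^sub>0, (1 / (t' - t)) * (a - a')) \<in> G" using \<open>t \<noteq> t'\<close> by simp
    then have "x\<^sub>0 \<in> fst ` G" by (rule image_eqI[rotated]) simp
    with x\<^sub>0 show False by blast
  qed
  then show "a = a'" using assms(3-5) dominated_linear_graph_unique[OF G] by auto
qed

lemma dominated_linear_graph_extension_le:
  assumes p: "sublinear p" and G: "dominated_linear_graph p G" and "(y, a) \<in> G"
    and lower: "\<And>y a. (y, a) \<in> G \<Longrightarrow> a - p (y - x\<^sub>0) \<le> \<xi>"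
    and upper: "\<And>y a. (y, a) \<in> G \<Longrightarrow> \<xi> \<le> p (y + x\<^sub>0) - a"
  shows "a + t * \<xi> \<le> p (y + t *\<^sub>R x\<^sub>0)"
proof (cases t "0::real" rule: linorder_cases)
  case less
  have "(-1 / t) * a - p ((-1 / t) *\<^sub>R y - x\<^sub>0) \<le> \<xi>"
    using lower dominated_linear_graph_scaleR[OF G \<open>(y, a) \<in> G\<close>] by blast
  then have "(-t) * ((-1 / t) * a - p ((-1 / t) *\<^sub>R y - x\<^sub>0)) \<le> (-t) * \<xi>"
    using less by (intro mult_left_mono) auto
  moreover have "y + t *\<^sub>R x\<^sub>0 = (-t) *\<^sub>R ((-1 / t) *\<^sub>R y - x\<^sub>0)"
    using less by (simp add: algebra_simps)
  then have "p (y + t *\<^sub>R x\<^sub>0) = (-t) * p ((-1 / t) *\<^sub>R y - x\<^sub>0)"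
    using sublinear_scaleR[OF p] less by (simp only:)
  ultimately show ?thesis using less by (simp add: algebra_simps)
next
  case equal
  then show ?thesis using dominated_linear_graph_le[OF G \<open>(y, a) \<in> G\<close>] by simp
next
  case greater
  have "\<xi> \<le> p ((1 / t) *\<^sub>R y + x\<^sub>0) - (1 / t) * a"
    using upper dominated_linear_graph_scaleR[OF G \<open>(y, a) \<in> G\<close>] by blast
  then have "t * \<xi> \<le> t * (p ((1 / t) *\<^sub>R y + x\<^sub>0) - (1 / t) * a)"
    using greater by (intro mult_left_mono) auto
  moreover have "y + t *\<^sub>R x\<^sub>0 = t *\<^sub>R ((1 / t) *\<^sub>R y + x\<^sub>0)"
    using greater by (simp add: algebra_simps)
  then have "p (y + t *\<^sub>R x\<^sub>0) = t * p ((1 / t) *\<^sub>R y + x\<^sub>0)"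
    using sublinear_scaleR[OF p] greater by (simp only:)
  ultimately show ?thesis using greater by (simp add: algebra_simps)
qed

lemma dominated_linear_graph_extend:
  assumes p: "sublinear p" and G: "dominated_linear_graph p G" and "G \<noteq> {}"
    and x\<^sub>0: "x\<^sub>0 \<notin> fst ` G"
  shows "\<exists>G'. dominated_linear_graph p G' \<and> G \<subset> G'"
proof -
  obtain \<xi> where lower: "\<And>y a. (y, a) \<in> G \<Longrightarrow> a - p (y - x\<^sub>0) \<le> \<xi>"
    and upper: "\<And>y a. (y, a) \<in> G \<Longrightarrow> \<xi> \<le> p (y + x\<^sub>0) - a"
    using dominated_linear_graph_extension_value[OF p G \<open>G \<noteq> {}\<close>] by blast
  define G' where "G' = {(y + t *\<^sub>R x\<^sub>0, a + t * \<xi>) | y a t. (y, a) \<in> G}"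
  have G'I: "(y, a) \<in> G \<Longrightarrow> (y + t *\<^sub>R x\<^sub>0, a + t * \<xi>) \<in> G'" for y a t
    unfolding G'_def by blast
  have "dominated_linear_graph p G'"
    unfolding dominated_linear_graph_def
  proof (intro conjI allI impI)
    fix x a b assume "(x, a) \<in> G'" "(x, b) \<in> G'"
    then show "a = b"
      unfolding G'_def using dominated_linear_graph_decomposition_unique[OF G x\<^sub>0] by blast
  next
    fix x a y b assume "(x, a) \<in> G'" "(y, b) \<in> G'"
    then obtain y\<^sub>1 a\<^sub>1 t\<^sub>1 y\<^sub>2 a\<^sub>2 t\<^sub>2 where "(y\<^sub>1, a\<^sub>1) \<in> G" "(y\<^sub>2, a\<^sub>2) \<in> G"
      and "x = y\<^sub>1 + t\<^sub>1 *\<^sub>R x\<^sub>0" "a = a\<^sub>1 + t\<^sub>1 * \<xi>" "y = y\<^sub>2 + t\<^sub>2 *\<^sub>R x\<^sub>0" "b = a\<^sub>2 + t\<^sub>2 * \<xi>"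
      unfolding G'_def by blast
    then show "(x + y, a + b) \<in> G'"
      using G'I[OF dominated_linear_graph_add[OF G], of y\<^sub>1 a\<^sub>1 y\<^sub>2 a\<^sub>2 "t\<^sub>1 + t\<^sub>2"]
      by (simp add: algebra_simps)
  next
    fix x a c assume "(x, a) \<in> G'"
    then obtain y a\<^sub>1 t where "(y, a\<^sub>1) \<in> G" "x = y + t *\<^sub>R x\<^sub>0" "a = a\<^sub>1 + t * \<xi>"
      unfolding G'_def by blast
    then show "(c *\<^sub>R x, c * a) \<in> G'"
      using G'I[OF dominated_linear_graph_scaleR[OF G], of y a\<^sub>1 c "c * t"]
      by (simp add: algebra_simps)
  next
    fix x a assume "(x, a) \<in> G'"
    then show "a \<le> p x"
      unfolding G'_def using dominated_linear_graph_extension_le[OF p G _ lower upper] by blast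
  qed
  moreover have "G \<subseteq> G'" using G'I[of _ _ 0] by auto
  moreover have "(x\<^sub>0, \<xi>) \<in> G' - G"
  proof -
    obtain y a where "(y, a) \<in> G" using \<open>G \<noteq> {}\<close> by auto
    then have "(0, 0) \<in> G" using dominated_linear_graph_scaleR[OF G, of y a 0] by simp
    then show ?thesis using G'I[of 0 0 1] x\<^sub>0 by force
  qed
  ultimately show ?thesis by blast
qed

theorem hahn_banach_graph:
  assumes p: "sublinear p" and G\<^sub>0: "dominated_linear_graph p G\<^sub>0" "G\<^sub>0 \<noteq> {}"
  obtains g where "linear g" "\<And>x. g x \<le> p x" "\<And>x a. (x, a) \<in> G\<^sub>0 \<Longrightarrow> g x = a"
proof -
  define A where "A = {G. dominated_linear_graph p G \<and> G\<^sub>0 \<subseteq> G}"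
  have "\<forall>C\<in>chains A. \<exists>U\<in>A. \<forall>X\<in>C. X \<subseteq> U"
  proof
    fix C assume C: "C \<in> chains A"
    show "\<exists>U\<in>A. \<forall>X\<in>C. X \<subseteq> U"
    proof (cases "C = {}")
      case True
      then show ?thesis using G\<^sub>0 A_def by auto
    next
      case False
      have "dominated_linear_graph p (\<Union>C)"
        using C A_def by (intro dominated_linear_graph_chain_Union) (auto simp: chains_def)
      moreover have "G\<^sub>0 \<subseteq> \<Union>C" using chainsD2[OF C] False A_def by blast
      ultimately show ?thesis unfolding A_def by blast
    qed
  qed
  then obtain M where "M \<in> A" and maximal: "\<And>X. X \<in> A \<Longrightarrow> M \<subseteq> X \<Longrightarrow> X = M"
    using Zorn_Lemma2[of A] by auto
  then have M: "dominated_linear_graph p M" and "G\<^sub>0 \<subseteq> M" by (auto simp: A_def)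
  have total: "x \<in> fst ` M" for x
  proof (rule ccontr)
    assume "x \<notin> fst ` M"
    then obtain M' where "dominated_linear_graph p M'" "M \<subset> M'"
      using dominated_linear_graph_extend[OF p M] \<open>G\<^sub>0 \<subseteq> M\<close> G\<^sub>0(2) by blast
    then show False using maximal[of M'] \<open>G\<^sub>0 \<subseteq> M\<close> A_def by blast
  qed
  define g where "g x = (THE a. (x, a) \<in> M)" for x
  have g_eq: "g x = a" if "(x, a) \<in> M" for x a
    unfolding g_def by (rule the_equality) (use that dominated_linear_graph_unique[OF M] in blast)+
  have graph: "(x, g x) \<in> M" for x
  proof -
    obtain a where "(x, a) \<in> M" using total[of x] by auto
    then show ?thesis using g_eq by simp
  qed
  have "linear g"
    by (rule linearI)
      (use g_eq dominated_linear_graph_add[OF M graph graph]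
           dominated_linear_graph_scaleR[OF M graph] in auto)
  moreover have "g x \<le> p x" for x using dominated_linear_graph_le[OF M graph] .
  moreover have "g x = a" if "(x, a) \<in> G\<^sub>0" for x a using g_eq that \<open>G\<^sub>0 \<subseteq> M\<close> by blast
  ultimately show ?thesis using that by blast
qed

corollary sublinear_supporting_linear:
  assumes p: "sublinear p"
  obtains g where "linear g" "\<And>x. g x \<le> p x" "g z = p z"
proof -
  define G\<^sub>0 where "G\<^sub>0 = range (\<lambda>t. (t *\<^sub>R z, t * p z))"
  have "dominated_linear_graph p G\<^sub>0"
    unfolding dominated_linear_graph_def G\<^sub>0_def
  proof (intro conjI allI impI)
    fix x a b assume "(x, a) \<in> range (\<lambda>t. (t *\<^sub>R z, t * p z))" "(x, b) \<in> range (\<lambda>t. (t *\<^sub>R z, t * p z))"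
    then obtain s t where "s *\<^sub>R z = t *\<^sub>R z" "a = s * p z" "b = t * p z" by auto
    then show "a = b" using sublinear_zero[OF p] by (cases "z = 0") auto
  next
    fix x a y b assume "(x, a) \<in> range (\<lambda>t. (t *\<^sub>R z, t * p z))" "(y, b) \<in> range (\<lambda>t. (t *\<^sub>R z, t * p z))"
    then obtain s t where "x = s *\<^sub>R z" "a = s * p z" "y = t *\<^sub>R z" "b = t * p z" by auto
    then show "(x + y, a + b) \<in> range (\<lambda>t. (t *\<^sub>R z, t * p z))"
      by (intro range_eqI[of _ _ "s + t"]) (simp add: algebra_simps)
  next
    fix x a c assume "(x, a) \<in> range (\<lambda>t. (t *\<^sub>R z, t * p z))"
    then obtain t where "x = t *\<^sub>R z" "a = t * p z" by auto
    then show "(c *\<^sub>R x, c * a) \<in> range (\<lambda>t. (t *\<^sub>R z, t * p z))"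
      by (intro range_eqI[of _ _ "c * t"]) simp
  next
    fix x a assume "(x, a) \<in> range (\<lambda>t. (t *\<^sub>R z, t * p z))"
    then obtain t where t: "x = t *\<^sub>R z" "a = t * p z" by auto
    show "a \<le> p x"
    proof (cases "t \<ge> 0")
      case True
      then show ?thesis using t sublinear_scaleR[OF p] by simp
    next
      case False
      have "0 \<le> p (t *\<^sub>R z) + p ((- t) *\<^sub>R z)"
        using sublinear_add[OF p, of "t *\<^sub>R z" "(- t) *\<^sub>R z"] sublinear_zero[OF p]
        by (simp add: scaleR_left_distrib[symmetric])
      then show ?thesis using t False sublinear_scaleR[OF p, of "- t" z] by simp
    qed
  qed
  moreover have "(z, p z) \<in> G\<^sub>0" unfolding G\<^sub>0_def by (rule range_eqI[of _ _ 1]) simp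
  ultimately show ?thesis
    using hahn_banach_graph[OF p] that by blast
qed

section \<open>The Bishop--Phelps--Bollobas theorem\<close>

lemma le_infdist:
  assumes "A \<noteq> {}" and "\<And>a. a \<in> A \<Longrightarrow> m \<le> dist x a"
  shows "m \<le> infdist x A"
  unfolding infdist_notempty[OF assms(1)] by (rule cINF_greatest) (use assms in auto)

lemma infdist_add_le_convex_cone:
  fixes C :: "'a::real_normed_vector set"
  assumes C: "convex_cone C"
  shows "infdist (x + y) C \<le> infdist x C + infdist y C"
proof -
  have "C \<noteq> {}" using C by (rule convex_cone_nonempty)
  have "infdist (x + y) C - infdist y C \<le> infdist x C"
  proof (rule le_infdist[OF \<open>C \<noteq> {}\<close>])
    fix a assume "a \<in> C"
    have "infdist (x + y) C - dist x a \<le> infdist y C"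
    proof (rule le_infdist[OF \<open>C \<noteq> {}\<close>])
      fix b assume "b \<in> C"
      have "infdist (x + y) C \<le> dist (x + y) (a + b)"
        using convex_cone_add[OF C \<open>a \<in> C\<close> \<open>b \<in> C\<close>] by (rule infdist_le)
      also have "\<dots> \<le> dist x a + dist y b"
        unfolding dist_norm using norm_triangle_ineq[of "x - a" "y - b"] by (simp add: algebra_simps)
      finally show "infdist (x + y) C - dist x a \<le> dist y b" by simp
    qed
    then show "infdist (x + y) C - infdist y C \<le> dist x a" by simp
  qed
  then show ?thesis by simp
qed

lemma infdist_scaleR_convex_cone:
  fixes C :: "'a::real_normed_vector set"
  assumes C: "convex_cone C" and "0 \<le> c"
  shows "infdist (c *\<^sub>R y) C = c * infdist y C"
proof (cases "c = 0")
  case True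
  then show ?thesis using convex_cone_contains_0[OF C] by simp
next
  case False
  with \<open>0 \<le> c\<close> have "c > 0" by simp
  have "C \<noteq> {}" using C by (rule convex_cone_nonempty)
  have "infdist (c *\<^sub>R y) C / c \<le> infdist y C"
  proof (rule le_infdist[OF \<open>C \<noteq> {}\<close>])
    fix a assume "a \<in> C"
    have "infdist (c *\<^sub>R y) C \<le> dist (c *\<^sub>R y) (c *\<^sub>R a)"
      using convex_cone_scaleR[OF C \<open>0 \<le> c\<close> \<open>a \<in> C\<close>] by (rule infdist_le)
    also have "\<dots> = c * dist y a"
      using \<open>c > 0\<close> by (simp add: dist_norm scaleR_diff_right[symmetric])
    finally show "infdist (c *\<^sub>R y) C / c \<le> dist y a"
      using \<open>c > 0\<close> by (simp add: divide_le_eq mult.commute)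
  qed
  moreover have "c * infdist y C \<le> infdist (c *\<^sub>R y) C"
  proof (rule le_infdist[OF \<open>C \<noteq> {}\<close>])
    fix a assume "a \<in> C"
    have "infdist y C \<le> dist y ((1 / c) *\<^sub>R a)"
      using convex_cone_scaleR[OF C _ \<open>a \<in> C\<close>, of "1 / c"] \<open>c > 0\<close> by (intro infdist_le) simp
    also have "\<dots> = dist (c *\<^sub>R y) a / c"
    proof -
      have "c *\<^sub>R y - a = c *\<^sub>R (y - (1 / c) *\<^sub>R a)" using \<open>c > 0\<close> by (simp add: algebra_simps)
      then show ?thesis using \<open>c > 0\<close> by (simp add: dist_norm)
    qed
    finally show "c * infdist y C \<le> dist (c *\<^sub>R y) a"
      using \<open>c > 0\<close> by (simp add: le_divide_eq mult.commute)
  qed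
  ultimately show ?thesis using \<open>c > 0\<close> by (simp add: divide_le_eq mult.commute)
qed

lemma sublinear_infdist_convex_cone:
  fixes C :: "'a::real_normed_vector set"
  assumes "convex_cone C"
  shows "sublinear (\<lambda>y. infdist y C)"
  using infdist_add_le_convex_cone[OF assms] infdist_scaleR_convex_cone[OF assms]
  by (simp add: sublinear_def)

text \<open>The cone of Bishop and Phelps attached to a functional \<open>f\<close> of norm at most one; for large \<open>k\<close>
  it is a thin cone around the direction in which \<open>f\<close> almost attains its norm.\<close>

definition phelps_cone :: "('a::real_normed_vector \<Rightarrow> real) \<Rightarrow> real \<Rightarrow> 'a set" where
  "phelps_cone f k = {w. norm w \<le> k * f w}"

lemma convex_cone_phelps_cone:
  assumes "linear f"
  shows "convex_cone (phelps_cone f k)"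
  unfolding convex_cone_iff phelps_cone_def
proof (intro conjI ballI allI impI; clarify?)
  show "norm 0 \<le> k * f 0" using linear_0[OF assms] by simp
next
  fix x y assume "norm x \<le> k * f x" "norm y \<le> k * f y"
  then have "norm (x + y) \<le> k * f x + k * f y" using norm_triangle_ineq[of x y] by linarith
  then show "norm (x + y) \<le> k * f (x + y)" using linear_add[OF assms] by (simp add: algebra_simps)
next
  fix x and c :: real assume "norm x \<le> k * f x" "0 \<le> c"
  then have "c * norm x \<le> c * (k * f x)" by (rule mult_left_mono)
  then show "norm (c *\<^sub>R x) \<le> k * f (c *\<^sub>R x)"
    using \<open>0 \<le> c\<close> linear_scale[OF assms] by (simp add: algebra_simps)
qed

lemma closed_phelps_cone:
  assumes "bounded_linear f"
  shows "closed (phelps_cone f k)"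
  unfolding phelps_cone_def
  using linear_continuous_on[OF assms]
  by (intro closed_Collect_le continuous_intros) (auto intro: continuous_on_compose2)

definition phelps_section :: "'a::real_normed_vector set \<Rightarrow> ('a \<Rightarrow> real) \<Rightarrow> real \<Rightarrow> 'a \<Rightarrow> 'a set" where
  "phelps_section B f k u = {z \<in> B. z - u \<in> phelps_cone f k}"

lemma phelps_section_self: "linear f \<Longrightarrow> u \<in> B \<Longrightarrow> u \<in> phelps_section B f k u"
  using convex_cone_contains_0[OF convex_cone_phelps_cone] by (simp add: phelps_section_def)

lemma phelps_section_subset:
  assumes "linear f" and "v \<in> phelps_section B f k u"
  shows "phelps_section B f k v \<subseteq> phelps_section B f k u"
proof
  fix z assume "z \<in> phelps_section B f k v"
  then have "(z - v) + (v - u) \<in> phelps_cone f k"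
    using assms by (intro convex_cone_add[OF convex_cone_phelps_cone]) (simp_all add: phelps_section_def)
  then show "z \<in> phelps_section B f k u" using \<open>z \<in> phelps_section B f k v\<close> by (simp add: phelps_section_def)
qed

lemma closed_phelps_section:
  assumes "bounded_linear f" and "closed B"
  shows "closed (phelps_section B f k u)"
proof -
  have "phelps_section B f k u = B \<inter> (+) u ` phelps_cone f k"
    unfolding phelps_section_def by (auto simp: image_iff) (metis add.commute diff_add_cancel)
  then show ?thesis using closed_phelps_cone[OF assms(1)] assms(2) by (simp add: closed_Int closed_translation)
qed

lemma phelps_section_near_sup:
  assumes "linear f" "0 \<le> k" and "v \<in> phelps_section B f k u" "z \<in> phelps_section B f k v"
    and "\<And>w. w \<in> phelps_section B f k u \<Longrightarrow> f w \<le> f v + e"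
  shows "norm (z - v) \<le> k * e"
proof -
  have "norm (z - v) \<le> k * (f z - f v)"
    using assms(4) by (simp add: phelps_section_def phelps_cone_def linear_diff[OF assms(1)])
  also have "\<dots> \<le> k * e"
  proof -
    have "f z \<le> f v + e" using assms(5) phelps_section_subset[OF assms(1,3)] assms(4) by blast
    then show ?thesis using \<open>0 \<le> k\<close> by (simp add: mult_left_mono)
  qed
  finally show ?thesis .
qed

lemma phelps_section_almost_max:
  assumes "linear f" "bdd_above (f ` B)" "u \<in> B" "0 < e"
  obtains v where "v \<in> phelps_section B f k u" "\<And>w. w \<in> phelps_section B f k u \<Longrightarrow> f w \<le> f v + e"
proof -
  define S where "S = phelps_section B f k u"
  have "bdd_above (f ` S)" using assms(2) by (rule bdd_above_mono) (auto simp: S_def phelps_section_def)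
  moreover have "S \<noteq> {}" using phelps_section_self[OF assms(1,3)] by (auto simp: S_def)
  moreover have "Sup (f ` S) - e < Sup (f ` S)" using \<open>0 < e\<close> by simp
  ultimately obtain v where "v \<in> S" "Sup (f ` S) - e < f v"
    using less_cSupD[of "f ` S"] by blast
  moreover have "f w \<le> f v + e" if "w \<in> S" for w
    using cSup_upper[of "f w" "f ` S"] that \<open>bdd_above (f ` S)\<close> \<open>Sup (f ` S) - e < f v\<close> by simp
  ultimately show ?thesis using that by (simp add: S_def)
qed

text \<open>Brondsted--Phelps: each term of a greedy sequence nearly maximises \<open>f\<close> on the section above
  the previous term, so the sections form a nest of closed sets with vanishing diameters whose
  common point is cone-maximal in \<open>B\<close>.\<close>

lemma phelps_maximal_point:
  fixes f :: "'a::banach \<Rightarrow> real"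
  assumes f: "bounded_linear f" and "k > 0"
    and B: "closed B" "bdd_above (f ` B)" and "x \<in> B"
  obtains z where "z \<in> B" "z - x \<in> phelps_cone f k"
    "\<And>w. w \<in> phelps_cone f k \<Longrightarrow> z + w \<in> B \<Longrightarrow> w = 0"
proof -
  have lin: "linear f" using f by (rule bounded_linear.linear)
  define C where "C = phelps_section B f k"
  have "\<exists>xs. \<forall>n. xs n \<in> C x \<and> xs (Suc n) \<in> C (xs n) \<and> (\<forall>w\<in>C (xs n). f w \<le> f (xs (Suc n)) + (1/2)^n)"
  proof (rule dependent_nat_choice)
    fix u n assume "u \<in> C x"
    then have "u \<in> B" by (simp add: C_def phelps_section_def)
    moreover have "0 < (1/2::real)^n" by simp
    ultimately obtain v where "v \<in> C u" "\<And>w. w \<in> C u \<Longrightarrow> f w \<le> f v + (1/2)^n"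
      using phelps_section_almost_max[OF lin B(2), of u "(1/2)^n" k] unfolding C_def by blast
    moreover have "v \<in> C x"
      using phelps_section_subset[OF lin \<open>u \<in> C x\<close>[unfolded C_def]] \<open>v \<in> C u\<close> by (auto simp: C_def)
    ultimately show "\<exists>v. v \<in> C x \<and> v \<in> C u \<and> (\<forall>w\<in>C u. f w \<le> f v + (1/2)^n)" by blast
  qed (use phelps_section_self[OF lin \<open>x \<in> B\<close>] in \<open>auto simp: C_def\<close>)
  then obtain xs where xs: "xs n \<in> C x" "xs (Suc n) \<in> C (xs n)"
      "\<And>w. w \<in> C (xs n) \<Longrightarrow> f w \<le> f (xs (Suc n)) + (1/2)^n" for n
    by blast
  have near: "norm (z - xs (Suc n)) \<le> k * (1/2)^n" if "z \<in> C (xs (Suc n))" for z n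
    using phelps_section_near_sup[OF lin _ xs(2)[unfolded C_def] that[unfolded C_def]] xs(3) \<open>k > 0\<close>
    by (simp add: C_def)
  have nested: "C (xs n) \<subseteq> C (xs m)" if "m \<le> n" for m n
    using lift_Suc_antimono_le[of "\<lambda>n. C (xs n)", OF _ that] phelps_section_subset[OF lin] xs(2)
    by (simp add: C_def)
  have small: "\<exists>n. \<forall>a\<in>C (xs n). \<forall>b\<in>C (xs n). dist a b < \<epsilon>" if "\<epsilon> > 0" for \<epsilon>
  proof -
    obtain N where N: "(1/2::real)^N < \<epsilon> / (2 * k)"
      using real_arch_pow_inv[of "\<epsilon> / (2 * k)" "1/2"] \<open>\<epsilon> > 0\<close> \<open>k > 0\<close> by auto
    have "dist a b < \<epsilon>" if "a \<in> C (xs (Suc N))" "b \<in> C (xs (Suc N))" for a b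
    proof -
      have "dist a b \<le> norm (a - xs (Suc N)) + norm (b - xs (Suc N))"
        using dist_triangle2[of a b "xs (Suc N)"] by (simp add: dist_norm)
      also have "\<dots> \<le> 2 * k * (1/2)^N" using near[OF that(1)] near[OF that(2)] by simp
      also have "\<dots> < \<epsilon>" using N \<open>k > 0\<close> by (simp add: field_simps)
      finally show ?thesis .
    qed
    then show ?thesis by blast
  qed
  have "closed (C u)" for u using closed_phelps_section[OF f B(1)] by (simp add: C_def)
  moreover have "C (xs n) \<noteq> {}" for n
  proof -
    have "xs n \<in> B" using xs(1) by (simp add: C_def phelps_section_def)
    then show ?thesis using phelps_section_self[OF lin, of "xs n" B k] unfolding C_def by blast
  qed
  ultimately obtain z where z: "z \<in> C (xs n)" for n
    using decreasing_closed_nest[of "\<lambda>n. C (xs n)", OF _ _ nested small] by blast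
  have "z \<in> C x" using z[of 0] phelps_section_subset[OF lin xs(1)[of 0, unfolded C_def]] by (auto simp: C_def)
  moreover have "w = 0" if "w \<in> phelps_cone f k" "z + w \<in> B" for w
  proof (rule ccontr)
    assume "w \<noteq> 0"
    obtain N where N: "(1/2::real)^N < norm w / (2 * k)"
      using real_arch_pow_inv[of "norm w / (2 * k)" "1/2"] \<open>w \<noteq> 0\<close> \<open>k > 0\<close> by auto
    have "(z - xs (Suc N)) + w \<in> phelps_cone f k"
      using z[of "Suc N"] that(1) by (intro convex_cone_add[OF convex_cone_phelps_cone[OF lin]])
        (auto simp: C_def phelps_section_def)
    then have "z + w \<in> C (xs (Suc N))" using that(2) by (simp add: C_def phelps_section_def algebra_simps)
    then have "norm w \<le> k * (1/2)^N + k * (1/2)^N"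
      using near[of "z + w" N] near[OF z[of "Suc N"]] norm_triangle_ineq4[of "z + w - xs (Suc N)" "z - xs (Suc N)"]
      by simp
    with N \<open>k > 0\<close> show False by (simp add: field_simps)
  qed
  ultimately show ?thesis using that by (auto simp: C_def phelps_section_def)
qed

text \<open>The distance to \<open>-K\<close> is a sublinear minorant of the norm that equals \<open>1\<close> at \<open>z\<close>; a linear
  functional below it and supporting it at \<open>z\<close> is automatically nonnegative on \<open>K\<close>.\<close>

lemma convex_cone_supporting_functional:
  fixes K :: "'a::real_normed_vector set"
  assumes K: "convex_cone K" and z: "norm z = 1"
    and maximal: "\<And>w. w \<in> K \<Longrightarrow> norm (z + w) \<le> 1 \<Longrightarrow> w = 0"
  obtains g where "linear g" "\<And>y. g y \<le> norm y" "g z = 1" "\<And>w. w \<in> K \<Longrightarrow> 0 \<le> g w"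
proof -
  define q where "q y = infdist y (uminus ` K)" for y
  have "convex_cone (uminus ` K)" using K by (intro convex_cone_linear_image conjI linear_uminus)
  then have q: "sublinear q" unfolding q_def by (rule sublinear_infdist_convex_cone)
  have q_le_norm: "q y \<le> norm y" for y
    using infdist_le[of 0 "uminus ` K" y] convex_cone_contains_0[OF K] by (simp add: q_def dist_norm)
  have "1 \<le> q z"
    unfolding q_def
  proof (rule le_infdist)
    show "uminus ` K \<noteq> {}" using convex_cone_nonempty[OF K] by simp
  next
    fix a assume "a \<in> uminus ` K"
    then obtain w where "w \<in> K" "a = - w" by auto
    show "1 \<le> dist z a"
    proof (cases "w = 0")
      case True
      then show ?thesis using \<open>a = - w\<close> z by simp
    next
      case False
      then have "\<not> norm (z + w) \<le> 1" using maximal \<open>w \<in> K\<close> by blast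
      then show ?thesis using \<open>a = - w\<close> by (simp add: dist_norm)
    qed
  qed
  then have "q z = 1" using q_le_norm[of z] z by simp
  obtain g where g: "linear g" "\<And>y. g y \<le> q y" "g z = q z"
    using sublinear_supporting_linear[OF q] by blast
  have "0 \<le> g w" if "w \<in> K" for w
  proof -
    have "g (- w) \<le> q (- w)" by (rule g(2))
    also have "q (- w) = 0" unfolding q_def using that by simp
    finally show ?thesis using linear_neg[OF g(1)] by simp
  qed
  then show ?thesis
    using that g q_le_norm \<open>q z = 1\<close> order_trans by metis
qed

lemma phelps_norm_one_point:
  fixes f :: "'a::banach \<Rightarrow> real"
  assumes f: "bounded_linear f" "\<And>y. f y \<le> norm y"
    and "0 < k" and x: "norm x \<le> 1" "1 < k * f x"
  obtains z where "norm z = 1" "z - x \<in> phelps_cone f k"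
    "\<And>w. w \<in> phelps_cone f k \<Longrightarrow> norm (z + w) \<le> 1 \<Longrightarrow> w = 0"
proof -
  have "f x > 0"
    using x(2) \<open>0 < k\<close> mult_nonneg_nonpos[of k "f x"] by (cases "f x > 0") auto
  have bdd: "bdd_above (f ` cball 0 1)"
    using f(2) by (intro bdd_aboveI[where M=1]) (auto intro: order_trans[OF f(2)])
  obtain z where z: "norm z \<le> 1" "z - x \<in> phelps_cone f k"
    and maximal: "\<And>w. w \<in> phelps_cone f k \<Longrightarrow> norm (z + w) \<le> 1 \<Longrightarrow> w = 0"
    using phelps_maximal_point[OF f(1) \<open>0 < k\<close> closed_cball bdd, of x] x(1) by auto
  have "norm z = 1"
  proof (rule ccontr)
    assume "norm z \<noteq> 1"
    with z(1) have "norm z < 1" by simp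
    define w where "w = (1 - norm z) *\<^sub>R x"
    have "x \<in> phelps_cone f k" using x by (simp add: phelps_cone_def)
    then have "w \<in> phelps_cone f k"
      unfolding w_def using \<open>norm z < 1\<close> f(1)
      by (intro convex_cone_scaleR convex_cone_phelps_cone bounded_linear.linear) auto
    moreover have "norm (z + w) \<le> 1"
    proof -
      have "norm (z + w) \<le> norm z + (1 - norm z) * norm x"
        using norm_triangle_ineq[of z w] \<open>norm z < 1\<close> by (simp add: w_def)
      also have "\<dots> \<le> norm z + (1 - norm z) * 1"
        using \<open>norm z < 1\<close> x(1) by (intro add_left_mono mult_left_mono) auto
      finally show ?thesis by simp
    qed
    ultimately have "w = 0" by (rule maximal)
    moreover have "x \<noteq> 0" using \<open>f x > 0\<close> linear_0[OF bounded_linear.linear[OF f(1)]] by auto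
    ultimately show False using \<open>norm z < 1\<close> by (simp add: w_def)
  qed
  then show ?thesis using that z(2) maximal by blast
qed

text \<open>A norm-one functional \<open>g\<close> that is nonnegative on the thin cone \<open>phelps_cone f k\<close> is nearly
  proportional to \<open>f\<close>: on the kernel of \<open>f\<close> it is small, because \<open>s x \<plusminus> y\<close> lies in the cone
  for \<open>s\<close> of order \<open>norm y / k\<close>.\<close>

lemma phelps_cone_kernel_bound:
  assumes f: "linear f" and g: "linear g" "\<And>w. w \<in> phelps_cone f k \<Longrightarrow> 0 \<le> g w"
    and x: "norm x \<le> 1" "g x \<le> 1" "1 < k * f x" and "f y = 0"
  shows "\<bar>g y\<bar> \<le> norm y / (k * f x - 1)"
proof -
  define s where "s = norm y / (k * f x - 1)"
  have "0 \<le> s" using x(3) by (simp add: s_def)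
  have ks: "k * f (s *\<^sub>R x) = s + norm y"
    using x(3) linear_scale[OF f] by (simp add: s_def field_simps)
  have "norm (s *\<^sub>R x) \<le> s" using x(1) \<open>0 \<le> s\<close> by (simp add: mult_left_le)
  then have plus: "s *\<^sub>R x + y \<in> phelps_cone f k" and minus: "s *\<^sub>R x - y \<in> phelps_cone f k"
    using norm_triangle_ineq[of "s *\<^sub>R x" y] norm_triangle_ineq4[of "s *\<^sub>R x" y] ks \<open>f y = 0\<close>
    by (simp_all add: phelps_cone_def linear_add[OF f] linear_diff[OF f])
  then have "0 \<le> s * g x + g y" "0 \<le> s * g x - g y"
    using g(2)[OF plus] g(2)[OF minus] by (simp_all add: linear_add[OF g(1)] linear_diff[OF g(1)] linear_scale[OF g(1)])
  moreover have "s * g x \<le> s" using x(2) \<open>0 \<le> s\<close> by (simp add: mult_left_le)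
  ultimately show ?thesis by (simp add: s_def[symmetric])
qed

lemma phelps_cone_functional_close:
  assumes f: "linear f" "\<And>y. \<bar>f y\<bar> \<le> norm y"
    and g: "linear g" "\<And>w. w \<in> phelps_cone f k \<Longrightarrow> 0 \<le> g w"
    and x: "norm x \<le> 1" "g x \<le> 1" "1/2 \<le> f x" "1 < k * f x"
  shows "\<bar>g y - (g x / f x) * f y\<bar> \<le> 3 * norm y / (k * f x - 1)"
proof -
  define y' where "y' = y - (f y / f x) *\<^sub>R x"
  have "f y' = 0" using x(3) by (simp add: y'_def linear_diff[OF f(1)] linear_scale[OF f(1)])
  have "norm ((f y / f x) *\<^sub>R x) \<le> 2 * norm y"
  proof -
    have "norm ((f y / f x) *\<^sub>R x) = \<bar>f y\<bar> * norm x / f x" using x(3) by simp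
    also have "\<dots> \<le> \<bar>f y\<bar> / f x"
      using x(1,3) by (intro divide_right_mono mult_left_le) auto
    also have "\<dots> \<le> norm y / (1/2)"
      using f(2)[of y] x(3) by (intro frac_le) auto
    finally show ?thesis by simp
  qed
  then have "norm y' \<le> 3 * norm y"
    using norm_triangle_ineq4[of y "(f y / f x) *\<^sub>R x"] by (simp add: y'_def)
  have "g y - (g x / f x) * f y = g y'"
    by (simp add: y'_def linear_diff[OF g(1)] linear_scale[OF g(1)])
  also have "\<bar>g y'\<bar> \<le> norm y' / (k * f x - 1)"
    using phelps_cone_kernel_bound[OF f(1) g x(1,2,4) \<open>f y' = 0\<close>] .
  also have "\<dots> \<le> 3 * norm y / (k * f x - 1)"
    using \<open>norm y' \<le> 3 * norm y\<close> x(4) by (intro divide_right_mono) auto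
  finally show ?thesis .
qed

lemma functional_close_of_nearly_proportional:
  assumes near: "\<And>y. \<bar>g y - c * f y\<bar> \<le> t * norm y" and f: "\<And>y. \<bar>f y\<bar> \<le> norm y"
    and z: "g z = 1" "norm z = 1" and c: "0 \<le> c" "c \<le> 1 + s" and "0 \<le> s"
  shows "\<bar>g y - f y\<bar> \<le> (2 * t + s) * norm y"
proof -
  have "1 - t \<le> c * f z" using near[of z] z by simp
  also have "\<dots> \<le> c" using f[of z] z(2) c(1) by (intro mult_left_le) auto
  finally have "1 - t \<le> c" .
  moreover have "0 \<le> t" using order_trans[OF abs_ge_zero near[of z]] z(2) by simp
  ultimately have "\<bar>c - 1\<bar> \<le> t + s" using c(2) \<open>0 \<le> s\<close> by (simp add: abs_le_iff)
  have "g y - f y = (g y - c * f y) + (c - 1) * f y" by (simp add: algebra_simps)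
  then have "\<bar>g y - f y\<bar> \<le> \<bar>g y - c * f y\<bar> + \<bar>c - 1\<bar> * \<bar>f y\<bar>"
    using abs_triangle_ineq[of "g y - c * f y" "(c - 1) * f y"] by (simp add: abs_mult)
  also have "\<dots> \<le> t * norm y + (t + s) * norm y"
    using near[of y] \<open>\<bar>c - 1\<bar> \<le> t + s\<close> f[of y] by (intro add_mono mult_mono) auto
  finally show ?thesis by (simp add: algebra_simps)
qed

theorem bishop_phelps_bollobas_real:
  fixes f :: "'a::banach \<Rightarrow> real"
  assumes f: "linear f" "\<And>y. \<bar>f y\<bar> \<le> norm y"
    and x: "norm x \<le> 1" "1 - \<eta> \<le> f x" and "\<eta> \<le> 1/2" and "4 \<le> k"
  obtains g z where "linear g" "\<And>y. g y \<le> norm y" "g z = 1" "norm z = 1" "norm (z - x) \<le> k * \<eta>"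
    "\<And>y. \<bar>g y - f y\<bar> \<le> (12 / (k - 2) + 2 * \<eta>) * norm y"
proof -
  define a where "a = f x"
  have "1/2 \<le> a" "a \<le> 1" "0 \<le> \<eta>" using x f(2)[of x] \<open>\<eta> \<le> 1/2\<close> by (auto simp: a_def)
  have "2 \<le> k * a" using mult_mono[OF \<open>4 \<le> k\<close> \<open>1/2 \<le> a\<close>] \<open>4 \<le> k\<close> by simp
  have "bounded_linear f"
    using f by (intro bounded_linear_intro[where K=1]) (auto simp: linear_add linear_scale)
  have "f y \<le> norm y" for y using f(2)[of y] by linarith
  moreover have "0 < k" "1 < k * f x" using \<open>4 \<le> k\<close> \<open>2 \<le> k * a\<close> by (simp_all add: a_def)
  ultimately obtain z where z: "norm z = 1" "z - x \<in> phelps_cone f k"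
    and maximal: "\<And>w. w \<in> phelps_cone f k \<Longrightarrow> norm (z + w) \<le> 1 \<Longrightarrow> w = 0"
    using phelps_norm_one_point[OF \<open>bounded_linear f\<close> _ _ x(1)] by blast
  obtain g where g: "linear g" "\<And>y. g y \<le> norm y" "g z = 1"
    and g_cone: "\<And>w. w \<in> phelps_cone f k \<Longrightarrow> 0 \<le> g w"
    using convex_cone_supporting_functional[OF convex_cone_phelps_cone[OF f(1)] z(1) maximal] by blast
  have "norm (z - x) \<le> k * (f z - a)"
    using z(2) by (simp add: phelps_cone_def a_def linear_diff[OF f(1)])
  also have "\<dots> \<le> k * \<eta>"
    using f(2)[of z] z(1) x(2) \<open>4 \<le> k\<close> by (intro mult_left_mono) (auto simp: a_def)
  finally have "norm (z - x) \<le> k * \<eta>" .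
  define t where "t = 3 / (k * a - 1)"
  have "t \<le> 6 / (k - 2)"
  proof -
    have "k / 2 - 1 \<le> k * a - 1" using mult_left_mono[OF \<open>1/2 \<le> a\<close>, of k] \<open>4 \<le> k\<close> by simp
    then have "3 / (k * a - 1) \<le> 3 / (k / 2 - 1)"
      using \<open>4 \<le> k\<close> \<open>2 \<le> k * a\<close> by (intro divide_left_mono mult_pos_pos) auto
    then show ?thesis using \<open>4 \<le> k\<close> by (simp add: t_def field_simps)
  qed
  have "0 \<le> g x" using g_cone x(1) \<open>2 \<le> k * a\<close> by (simp add: phelps_cone_def a_def)
  have "g x \<le> 1" using g(2)[of x] x(1) by simp
  have near: "\<bar>g y - (g x / a) * f y\<bar> \<le> t * norm y" for y
    using phelps_cone_functional_close[OF f g(1) g_cone x(1) \<open>g x \<le> 1\<close>, where y=y] \<open>1/2 \<le> a\<close> \<open>2 \<le> k * a\<close>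
    by (simp add: a_def t_def)
  have "0 \<le> g x / a" using \<open>0 \<le> g x\<close> \<open>1/2 \<le> a\<close> by simp
  have "g x / a \<le> 1 + 2 * \<eta>"
  proof -
    have "g x / a \<le> 1 / a" using \<open>g x \<le> 1\<close> \<open>1/2 \<le> a\<close> by (simp add: divide_right_mono)
    also have "\<dots> = 1 + (1 - a) / a" using \<open>1/2 \<le> a\<close> by (simp add: field_simps)
    also have "(1 - a) / a \<le> \<eta> / (1/2)"
      using x(2) \<open>1/2 \<le> a\<close> \<open>a \<le> 1\<close> by (intro frac_le) (auto simp: a_def)
    finally show ?thesis by simp
  qed
  then have "\<bar>g y - f y\<bar> \<le> (2 * t + 2 * \<eta>) * norm y" for y
    using functional_close_of_nearly_proportional[OF near f(2) g(3) z(1) \<open>0 \<le> g x / a\<close>] \<open>0 \<le> \<eta>\<close>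
    by simp
  also have "(2 * t + 2 * \<eta>) * norm y \<le> (12 / (k - 2) + 2 * \<eta>) * norm y" for y
    using \<open>t \<le> 6 / (k - 2)\<close> by (intro mult_right_mono) auto
  finally show ?thesis using that g z(1) \<open>norm (z - x) \<le> k * \<eta>\<close> by blast
qed

section \<open>Scalars and dual functionals\<close>

lemma scalar_setting_cases:
  assumes "scalar_setting K sm"
  obtains (real) "K = \<real>" "\<And>c x. sm c x = Re c *\<^sub>R x" | (complex) "K = UNIV" "complex_structure sm"
  using assms unfolding scalar_setting_def by blast

lemma scalar_setting_mem:
  assumes "scalar_setting K sm"
  shows scalar_setting_diff: "a \<in> K \<Longrightarrow> b \<in> K \<Longrightarrow> a - b \<in> K"
    and scalar_setting_mult: "a \<in> K \<Longrightarrow> b \<in> K \<Longrightarrow> a * b \<in> K"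
    and scalar_setting_cnj: "a \<in> K \<Longrightarrow> cnj a \<in> K"
    and scalar_setting_of_real: "complex_of_real r \<in> K"
  using assms by (cases rule: scalar_setting_cases; auto simp: complex_is_Real_iff)+

lemma unimodD: "a \<in> unimod K \<Longrightarrow> a \<in> K" "a \<in> unimod K \<Longrightarrow> cmod a = 1"
  unfolding unimod_def by auto

lemma norm_sm_unimod:
  assumes "scalar_setting K sm" and "a \<in> unimod K"
  shows "norm (sm a y) = norm y"
  using assms(1)
proof (cases rule: scalar_setting_cases)
  case real
  then have "\<bar>Re a\<bar> = 1" using assms(2) by (auto simp: unimod_def complex_is_Real_iff cmod_eq_Re)
  then show ?thesis using real by simp
next
  case complex
  then show ?thesis using assms(2) by (simp add: complex_structure_def unimod_def)
qed

lemma sm_diff: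
  assumes "scalar_setting K sm"
  shows "sm a (x - y) = sm a x - sm a y"
  using assms
proof (cases rule: scalar_setting_cases)
  case real
  then show ?thesis by (simp add: scaleR_diff_right)
next
  case complex
  then have "sm a ((x - y) + y) = sm a (x - y) + sm a y" unfolding complex_structure_def by blast
  then show ?thesis by simp
qed

lemma scalar_setting_phase:
  assumes "scalar_setting K sm" and "z \<in> K"
  obtains a where "a \<in> unimod K" "a * z = complex_of_real (cmod z)"
  using assms(1)
proof (cases rule: scalar_setting_cases)
  case real
  then obtain r where "z = complex_of_real r" using assms(2) by (auto elim: Reals_cases)
  then show ?thesis
    using that[of 1] that[of "-1"] real by (cases "0 \<le> r") (auto simp: unimod_def)
next
  case complex
  show ?thesis
  proof (cases "z = 0")
    case True
    then show ?thesis using that[of 1] complex by (simp add: unimod_def)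
  next
    case False
    have "cnj z * z = complex_of_real (cmod z) * complex_of_real (cmod z)"
      using complex_norm_square[of z] by (simp add: power2_eq_square mult.commute)
    then have "(cnj z / complex_of_real (cmod z)) * z = complex_of_real (cmod z)"
      using False by (simp add: field_simps)
    then show ?thesis
      using that[of "cnj z / complex_of_real (cmod z)"] complex False by (simp add: unimod_def norm_divide)
  qed
qed

lemma dualD:
  assumes "f \<in> dual K sm"
  shows "bounded_linear f" "f x \<in> K" "c \<in> K \<Longrightarrow> f (sm c x) = c * f x"
  using assms unfolding dual_def by auto

lemma dual_diff:
  assumes "scalar_setting K sm" and "f \<in> dual K sm" and "g \<in> dual K sm"
  shows "(\<lambda>x. f x - g x) \<in> dual K sm"
  using dualD[OF assms(2)] dualD[OF assms(3)] scalar_setting_diff[OF assms(1)] unfolding dual_def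
  by (auto intro: bounded_linear_sub simp: right_diff_distrib)

lemma dual_cmult:
  assumes "scalar_setting K sm" and "f \<in> dual K sm" and "c \<in> K"
  shows "(\<lambda>x. c * f x) \<in> dual K sm"
  using dualD[OF assms(2)] scalar_setting_mult[OF assms(1)] assms(3) unfolding dual_def
  by (auto intro: bounded_linear_const_mult simp: mult.left_commute)

text \<open>Rotating the argument by a unimodular scalar turns the modulus of a functional value into
  its real part.\<close>

lemma dual_cmod_le_of_Re_le:
  assumes "scalar_setting K sm" and D: "D \<in> dual K sm" and Re_le: "\<And>v. Re (D v) \<le> C * norm v"
  shows "cmod (D y) \<le> C * norm y"
proof -
  obtain a where a: "a \<in> unimod K" "a * D y = complex_of_real (cmod (D y))"
    using scalar_setting_phase[OF assms(1) dualD(2)[OF D]] .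
  have "cmod (D y) = Re (D (sm a y))" using dualD(3)[OF D unimodD(1)[OF a(1)]] a(2) by simp
  also have "\<dots> \<le> C * norm y" using Re_le[of "sm a y"] norm_sm_unimod[OF assms(1) a(1)] by simp
  finally show ?thesis .
qed

lemma complex_structure_complexification:
  assumes sm: "complex_structure sm" and g: "linear g" "\<And>y. \<bar>g y\<bar> \<le> norm y"
  defines "G \<equiv> \<lambda>y. complex_of_real (g y) - \<i> * complex_of_real (g (sm \<i> y))"
  shows "bounded_linear G" "\<And>c x. G (sm c x) = c * G x" "\<And>y. Re (G y) = g y"
proof -
  have sm_add: "sm (a + b) x = sm a x + sm b x" and sm_add_right: "sm a (x + y) = sm a x + sm a y"
    and sm_mult: "sm (a * b) x = sm a (sm b x)" and sm_of_real: "sm (complex_of_real r) x = r *\<^sub>R x"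
    and norm_sm: "norm (sm a x) = cmod a * norm x" for a b x y r
    using sm unfolding complex_structure_def by blast+
  have sm_scaleR: "sm \<i> (r *\<^sub>R x) = r *\<^sub>R sm \<i> x" for r x
  proof -
    have "sm \<i> (r *\<^sub>R x) = sm (\<i> * complex_of_real r) x" by (simp only: sm_mult sm_of_real)
    also have "\<dots> = sm (complex_of_real r) (sm \<i> x)" by (simp only: mult.commute[of \<i>] sm_mult)
    finally show ?thesis by (simp only: sm_of_real)
  qed
  have sm_ii: "sm \<i> (sm \<i> x) = - x" for x
    using sm_mult[of \<i> \<i> x] sm_of_real[of "-1" x] by simp
  have sm_decompose: "sm c x = Re c *\<^sub>R x + Im c *\<^sub>R sm \<i> x" for c x
  proof -
    have "c = complex_of_real (Re c) + complex_of_real (Im c) * \<i>"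
      using complex_eq[of c] by (simp add: mult.commute)
    then have "sm c x = sm (complex_of_real (Re c) + complex_of_real (Im c) * \<i>) x"
      by (rule arg_cong)
    then show ?thesis by (simp only: sm_add sm_mult sm_of_real)
  qed
  have G_add: "G (x + y) = G x + G y" for x y
    by (simp add: G_def sm_add_right linear_add[OF g(1)] algebra_simps)
  have G_scaleR: "G (r *\<^sub>R x) = r *\<^sub>R G x" for r x
    by (simp add: G_def sm_scaleR linear_scale[OF g(1)] scaleR_conv_of_real algebra_simps)
  have G_i: "G (sm \<i> x) = \<i> * G x" for x
    by (simp add: G_def sm_ii linear_neg[OF g(1)] algebra_simps)
  have "norm (G x) \<le> norm x * 2" for x
  proof -
    have "norm (G x) \<le> cmod (complex_of_real (g x)) + cmod (\<i> * complex_of_real (g (sm \<i> x)))"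
      unfolding G_def by (rule norm_triangle_ineq4)
    also have "\<dots> = \<bar>g x\<bar> + \<bar>g (sm \<i> x)\<bar>" by (simp add: norm_mult)
    also have "\<dots> \<le> norm x + norm x" using g(2)[of x] g(2)[of "sm \<i> x"] norm_sm[of \<i> x] by simp
    finally show ?thesis by simp
  qed
  then show "bounded_linear G"
    by (intro bounded_linear_intro[where K=2]) (simp_all add: G_add G_scaleR)
  show "G (sm c x) = c * G x" for c x
  proof -
    have "G (sm c x) = Re c *\<^sub>R G x + Im c *\<^sub>R (\<i> * G x)" 
      unfolding sm_decompose[of c x] by (simp add: G_add G_scaleR G_i)
    also have "\<dots> = c * G x" by (simp add: scaleR_conv_of_real complex_eq_iff)
    finally show ?thesis .
  qed
  show "Re (G y) = g y" for y by (simp add: G_def)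
qed

lemma dual_of_real_functional:
  assumes ss: "scalar_setting K sm" and g: "linear g" "\<And>y. g y \<le> norm y"
  obtains G where "G \<in> dual K sm" "\<And>y. Re (G y) = g y"
proof -
  have g_abs: "\<bar>g y\<bar> \<le> norm y" for y using g(2)[of y] g(2)[of "- y"] linear_neg[OF g(1)] by simp
  show ?thesis
    using ss
  proof (cases rule: scalar_setting_cases)
    case real
    have "bounded_linear (\<lambda>y. complex_of_real (g y))"
      using g_abs by (intro bounded_linear_intro[where K=1])
        (auto simp: linear_add[OF g(1)] linear_scale[OF g(1)] scaleR_conv_of_real)
    moreover have "complex_of_real (g (Re c *\<^sub>R x)) = c * complex_of_real (g x)" if "c \<in> \<real>" for c x
      using that by (auto simp: linear_scale[OF g(1)] elim: Reals_cases)
    ultimately have "(\<lambda>y. complex_of_real (g y)) \<in> dual K sm" using real by (simp add: dual_def)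
    then show ?thesis using that by simp
  next
    case complex
    define G where "G y = complex_of_real (g y) - \<i> * complex_of_real (g (sm \<i> y))" for y
    have "G \<in> dual K sm" "\<And>y. Re (G y) = g y"
      using complex_structure_complexification[OF complex(2) g(1) g_abs] complex(1)
      by (simp_all add: dual_def G_def[abs_def])
    then show ?thesis by (rule that)
  qed
qed

lemma bishop_phelps_bollobas_dual:
  fixes x :: "'a::banach"
  assumes ss: "scalar_setting K sm" and h: "h \<in> dual K sm" "\<And>z. cmod (h z) \<le> norm z"
    and x: "norm x \<le> 1" "1 - \<eta> \<le> Re (h x)" and "\<eta> \<le> 1/2" and "4 \<le> k"
  obtains G z where "G \<in> dual K sm" "onorm G = 1" "G z = 1" "norm z = 1" "norm (z - x) \<le> k * \<eta>"
    "\<And>y. cmod (G y - h y) \<le> (12 / (k - 2) + 2 * \<eta>) * norm y"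
proof -
  have "linear (\<lambda>y. Re (h y))"
    using bounded_linear_compose[OF bounded_linear_Re dualD(1)[OF h(1)]] by (rule bounded_linear.linear)
  moreover have "\<bar>Re (h y)\<bar> \<le> norm y" for y using abs_Re_le_cmod[of "h y"] h(2)[of y] by linarith
  ultimately obtain g z where g: "linear g" "\<And>y. g y \<le> norm y" "g z = 1" and z: "norm z = 1"
    "norm (z - x) \<le> k * \<eta>" and g_close: "\<And>y. \<bar>g y - Re (h y)\<bar> \<le> (12 / (k - 2) + 2 * \<eta>) * norm y"
    using bishop_phelps_bollobas_real[of "\<lambda>y. Re (h y)" x \<eta> k] x \<open>\<eta> \<le> 1/2\<close> \<open>4 \<le> k\<close> by auto
  obtain G where G: "G \<in> dual K sm" "\<And>y. Re (G y) = g y"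
    using dual_of_real_functional[OF ss g(1,2)] by blast
  have G_le: "cmod (G y) \<le> norm y" for y using dual_cmod_le_of_Re_le[OF ss G(1), of 1] G(2) g(2) by simp
  have "G z = 1"
  proof -
    have "(Re (G z))\<^sup>2 + (Im (G z))\<^sup>2 \<le> 1" using G_le[of z] z(1) by (simp add: cmod_power2[symmetric] power_le_one)
    then show ?thesis using G(2)[of z] g(3) by (simp add: complex_eq_iff)
  qed
  have "onorm G = 1"
    using onorm_bound[of 1 G] G_le le_onorm[OF dualD(1)[OF G(1)], of z] \<open>G z = 1\<close> z(1) by simp
  have "Re (G v - h v) \<le> (12 / (k - 2) + 2 * \<eta>) * norm v" for v
    using g_close[of v] G(2)[of v] by simp
  then have "cmod (G y - h y) \<le> (12 / (k - 2) + 2 * \<eta>) * norm y" for y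
    using dual_cmod_le_of_Re_le[OF ss dual_diff[OF ss G(1) h(1)]] by simp
  then show ?thesis using that G(1) \<open>onorm G = 1\<close> \<open>G z = 1\<close> z by blast
qed

theorem bishop_phelps_bollobas:
  fixes e :: real
  assumes ss: "scalar_setting K sm" and "e > 0"
  obtains \<eta> where "\<eta> > 0"
    "\<And>h (x::'a::banach). h \<in> dual K sm \<Longrightarrow> (\<And>z. cmod (h z) \<le> norm z) \<Longrightarrow> norm x \<le> 1 \<Longrightarrow>
       1 - \<eta> < Re (h x) \<Longrightarrow>
       \<exists>G z. G \<in> dual K sm \<and> onorm G = 1 \<and> G z = 1 \<and> norm z = 1 \<and> norm (z - x) \<le> e
         \<and> (\<forall>y. cmod (G y - h y) \<le> e * norm y)"
proof -
  define k where "k = 4 + 24 / e"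
  define \<eta> where "\<eta> = min (1/2) (min (e/4) (e/k))"
  have "4 \<le> k" using \<open>e > 0\<close> by (simp add: k_def)
  have "\<eta> > 0" using \<open>e > 0\<close> \<open>4 \<le> k\<close> by (simp add: \<eta>_def)
  have "\<eta> \<le> 1/2" "\<eta> \<le> e/4" "\<eta> \<le> e/k" unfolding \<eta>_def by linarith+
  have "k * \<eta> \<le> e" using \<open>\<eta> \<le> e/k\<close> \<open>4 \<le> k\<close> by (simp add: field_simps)
  have "12 / (k - 2) = 12 * e / (2 * e + 24)" using \<open>e > 0\<close> by (simp add: k_def field_simps)
  also have "\<dots> \<le> e / 2" using \<open>e > 0\<close> by (simp add: field_simps)
  finally have err: "(12 / (k - 2) + 2 * \<eta>) * norm y \<le> e * norm y" for y :: 'a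
    using \<open>\<eta> \<le> e/4\<close> by (intro mult_right_mono) auto
  show ?thesis
  proof (rule that[OF \<open>\<eta> > 0\<close>])
    fix h and x :: 'a
    assume "h \<in> dual K sm" "\<And>z. cmod (h z) \<le> norm z" "norm x \<le> 1" "1 - \<eta> < Re (h x)"
    then obtain G z where "G \<in> dual K sm" "onorm G = 1" "G z = 1" "norm z = 1" "norm (z - x) \<le> k * \<eta>"
      "\<And>y. cmod (G y - h y) \<le> (12 / (k - 2) + 2 * \<eta>) * norm y"
      using bishop_phelps_bollobas_dual[OF ss, of h x \<eta> k] \<open>\<eta> \<le> 1/2\<close> \<open>4 \<le> k\<close> by auto
    then show "\<exists>G z. G \<in> dual K sm \<and> onorm G = 1 \<and> G z = 1 \<and> norm z = 1 \<and> norm (z - x) \<le> e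
        \<and> (\<forall>y. cmod (G y - h y) \<le> e * norm y)"
      using \<open>k * \<eta> \<le> e\<close> err order_trans by (intro exI[of _ G] exI[of _ z]) blast
  qed
qed

section \<open>The numerical index of Lipschitz maps\<close>

lemma lip_norm_eq_1:
  fixes T :: "'a::real_normed_vector \<Rightarrow> 'a"
  assumes "T \<in> Lip0" and "\<exists>x::'a. x \<noteq> 0" and "lip_norm T = 1"
  shows lip_norm_eq_1_nonexpansive: "norm (T x - T y) \<le> norm (x - y)"
    and lip_norm_eq_1_almost_attained: "\<epsilon> > 0 \<Longrightarrow> \<exists>u v. u \<noteq> v \<and> (1 - \<epsilon>) * norm (u - v) < norm (T u - T v)"
proof -
  define R where "R = {norm (T x - T y) / norm (x - y) | x y. x \<noteq> y}"
  obtain C where C: "lipschitz_on C UNIV T" using assms(1) by (auto simp: Lip0_def)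
  have "bdd_above R"
  proof (rule bdd_aboveI)
    fix r assume "r \<in> R"
    then obtain x y where "x \<noteq> y" "r = norm (T x - T y) / norm (x - y)" by (auto simp: R_def)
    moreover have "norm (T x - T y) \<le> C * norm (x - y)" using lipschitz_onD[OF C] by (simp add: dist_norm)
    ultimately show "r \<le> C" by (simp add: divide_le_eq)
  qed
  have "R \<noteq> {}" using assms(2) by (auto simp: R_def)
  have "Sup R = 1" using assms(3) by (simp add: lip_norm_def R_def)
  show "norm (T x - T y) \<le> norm (x - y)"
  proof (cases "x = y")
    case False
    then have "norm (T x - T y) / norm (x - y) \<le> Sup R"
      using \<open>bdd_above R\<close> by (intro cSup_upper) (auto simp: R_def)
    then show ?thesis using False \<open>Sup R = 1\<close> by (simp add: divide_le_eq)
  qed simp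
  assume "\<epsilon> > 0"
  then obtain r where "r \<in> R" "1 - \<epsilon> < r" using less_cSupD[OF \<open>R \<noteq> {}\<close>] \<open>Sup R = 1\<close> by force
  then obtain u v where "u \<noteq> v" "1 - \<epsilon> < norm (T u - T v) / norm (u - v)" by (auto simp: R_def)
  then show "\<exists>u v. u \<noteq> v \<and> (1 - \<epsilon>) * norm (u - v) < norm (T u - T v)"
    by (intro exI[of _ u] exI[of _ v]) (simp add: less_divide_eq)
qed

lemma Dset_norm_le:
  assumes "f \<in> Dset K sm x" and "x \<noteq> 0"
  shows "cmod (f y) \<le> norm x * norm y"
proof -
  have f: "f \<in> dual K sm" using assms by (simp add: Dset_def)
  have "onorm f * norm x = norm x * norm x" using assms by (simp add: Dset_def power2_eq_square)
  then have "onorm f = norm x" using \<open>x \<noteq> 0\<close> by simp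
  then show ?thesis using onorm[OF dualD(1)[OF f]] by simp
qed

lemma omega_quotient_le_1:
  assumes "\<And>x y. norm (T x - T y) \<le> norm (x - y)" and "f \<in> Dset K sm (x - y)"
  shows "cmod (f (T x - T y)) / (norm (x - y))\<^sup>2 \<le> 1"
proof (cases "x = y")
  case False
  have "cmod (f (T x - T y)) \<le> norm (x - y) * norm (x - y)"
    using Dset_norm_le[OF assms(2), of "T x - T y"] False mult_left_mono[OF assms(1)[of x y]]
    by (simp add: order_trans)
  then show ?thesis using False by (simp add: power2_eq_square divide_le_eq_1)
qed simp

lemma rotated_norming_functional_in_Dset:
  assumes ss: "scalar_setting K sm" and G: "G \<in> dual K sm" "onorm G = 1" "G z = 1"
    and "norm z = 1" and \<beta>: "\<beta> \<in> unimod K" and "s > 0"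
  shows "(\<lambda>y. (complex_of_real s * cnj \<beta>) * G y) \<in> Dset K sm (s *\<^sub>R sm \<beta> z)"
proof -
  define F where "F y = (complex_of_real s * cnj \<beta>) * G y" for y
  have "complex_of_real s * cnj \<beta> \<in> K"
    using scalar_setting_mult[OF ss scalar_setting_of_real[OF ss] scalar_setting_cnj[OF ss unimodD(1)[OF \<beta>]]] .
  then have F: "F \<in> dual K sm" unfolding F_def by (rule dual_cmult[OF ss G(1)])
  have "\<beta> * cnj \<beta> = 1" using complex_norm_square[of \<beta>] unimodD(2)[OF \<beta>] by simp
  have cmod_F: "cmod (F y) = s * cmod (G y)" for y
    using \<open>s > 0\<close> unimodD(2)[OF \<beta>] by (simp add: F_def norm_mult)
  have "onorm F = s"
  proof (rule antisym)
    show "onorm F \<le> s"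
      using onorm[OF dualD(1)[OF G(1)]] G(2) \<open>s > 0\<close> by (intro onorm_bound) (auto simp: cmod_F)
    show "s \<le> onorm F" using le_onorm[OF dualD(1)[OF F], of z] cmod_F[of z] G(3) \<open>norm z = 1\<close> by simp
  qed
  have "norm (s *\<^sub>R sm \<beta> z) = s" using norm_sm_unimod[OF ss \<beta>] \<open>norm z = 1\<close> \<open>s > 0\<close> by simp
  moreover have "F (s *\<^sub>R sm \<beta> z) = complex_of_real (s * s)"
  proof -
    have "F (s *\<^sub>R sm \<beta> z) = s *\<^sub>R (\<beta> * F z)"
      using linear_scale[OF bounded_linear.linear[OF dualD(1)[OF F]]] dualD(3)[OF F unimodD(1)[OF \<beta>]] by simp
    also have "\<dots> = complex_of_real (s * s) * (\<beta> * cnj \<beta>)" by (simp add: F_def G(3) scaleR_conv_of_real)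
    finally show ?thesis using \<open>\<beta> * cnj \<beta> = 1\<close> by simp
  qed
  ultimately show ?thesis using F \<open>onorm F = s\<close> by (simp add: Dset_def F_def[abs_def] power2_eq_square)
qed

lemma join_lush_weight_ge_half:
  assumes "join_lush K sm" "norm x = 1" "norm y = 1" "\<epsilon> > 0"
  obtains ys x\<^sub>1 x\<^sub>2 t a\<^sub>1 a\<^sub>2 where "ys \<in> dual K sm" "onorm ys = 1" "y \<in> slice ys \<epsilon>"
    "x\<^sub>1 \<in> slice ys \<epsilon>" "x\<^sub>2 \<in> slice ys \<epsilon>" "1/2 \<le> t" "t \<le> 1" "a\<^sub>1 \<in> unimod K" "a\<^sub>2 \<in> unimod K"
    "norm (x - (t *\<^sub>R sm a\<^sub>1 x\<^sub>1 + (1 - t) *\<^sub>R sm a\<^sub>2 x\<^sub>2)) < \<epsilon>"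
proof -
  obtain ys x\<^sub>1 x\<^sub>2 t a\<^sub>1 a\<^sub>2 where ys: "ys \<in> dual K sm" "onorm ys = 1" "y \<in> slice ys \<epsilon>"
    and x: "x\<^sub>1 \<in> slice ys \<epsilon>" "x\<^sub>2 \<in> slice ys \<epsilon>" "t \<in> {0..1}" "a\<^sub>1 \<in> unimod K" "a\<^sub>2 \<in> unimod K"
    and close: "norm (x - (t *\<^sub>R sm a\<^sub>1 x\<^sub>1 + (1 - t) *\<^sub>R sm a\<^sub>2 x\<^sub>2)) < \<epsilon>"
    using assms unfolding join_lush_def by meson
  show ?thesis
  proof (cases "1/2 \<le> t")
    case True
    then show ?thesis using that ys x close by simp
  next
    case False
    have "norm (x - ((1 - t) *\<^sub>R sm a\<^sub>2 x\<^sub>2 + (1 - (1 - t)) *\<^sub>R sm a\<^sub>1 x\<^sub>1)) < \<epsilon>"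
      using close by (simp add: add.commute)
    then show ?thesis using that[of ys x\<^sub>2 x\<^sub>1 "1 - t" a\<^sub>2 a\<^sub>1] ys x False by simp
  qed
qed

lemma Re_nonexpansive_image_shift:
  assumes "bounded_linear \<phi>" "\<And>z. cmod (\<phi> z) \<le> norm z"
    and T: "\<And>a b. norm (T a - T b) \<le> norm (a - b)"
  shows "Re (\<phi> (T u - T v)) \<le> Re (\<phi> (T w - T v)) + norm (u - w)"
proof -
  have "\<phi> (T u - T v) = \<phi> (T w - T v) + \<phi> (T u - T w)"
    using linear_add[OF bounded_linear.linear[OF assms(1)], of "T w - T v" "T u - T w"] by simp
  moreover have "Re (\<phi> (T u - T w)) \<le> norm (u - w)"
    using complex_Re_le_cmod[of "\<phi> (T u - T w)"] assms(2)[of "T u - T w"] T[of u w] by linarith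
  ultimately show ?thesis by simp
qed

text \<open>Nonexpansiveness lets the second leg and the error term absorb at most \<open>r (1 - \<mu>) + r \<epsilon>\<close> of
  the stretching of \<open>T u - T v\<close> measured by \<open>ys\<close>, so the first leg, from \<open>v\<close> to \<open>v + r \<mu> \<beta>\<^sub>1 z\<^sub>1\<close>, is
  stretched almost fully; replacing \<open>z\<^sub>1\<close> by \<open>z\<^sub>0\<close> makes it supported by a rotated multiple of \<open>G\<close>.\<close>

lemma join_lush_Dset_witness:
  fixes T :: "'a::real_normed_vector \<Rightarrow> 'a"
  assumes ss: "scalar_setting K sm" and T: "\<And>a b. norm (T a - T b) \<le> norm (a - b)"
    and ys: "ys \<in> dual K sm" "\<And>z. cmod (ys z) \<le> norm z"
    and r: "0 < r" "norm (u - v) = r" and stretched: "r * (1 - 2 * \<epsilon>) \<le> Re (ys (T u - T v))"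
    and \<mu>: "1/2 \<le> \<mu>" "\<mu> \<le> 1" and \<beta>: "\<beta>\<^sub>1 \<in> unimod K" "\<beta>\<^sub>2 \<in> unimod K"
    and z: "norm z\<^sub>1 \<le> 1" "norm z\<^sub>2 \<le> 1"
    and comb: "norm ((u - v) - r *\<^sub>R (\<mu> *\<^sub>R sm \<beta>\<^sub>1 z\<^sub>1 + (1 - \<mu>) *\<^sub>R sm \<beta>\<^sub>2 z\<^sub>2)) \<le> r * \<epsilon>"
    and G: "G \<in> dual K sm" "onorm G = 1" "G z\<^sub>0 = 1" "norm z\<^sub>0 = 1"
    and G_near: "norm (z\<^sub>0 - z\<^sub>1) \<le> \<epsilon>'" "\<And>y. cmod (G y - ys y) \<le> \<epsilon>' * norm y"
  shows "\<exists>p q F. p \<noteq> q \<and> F \<in> Dset K sm (p - q)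
           \<and> 1 - 6 * \<epsilon> - 2 * \<epsilon>' \<le> cmod (F (T p - T q)) / (norm (p - q))\<^sup>2"
proof -
  define s where "s = r * \<mu>"
  define w where "w = v + s *\<^sub>R sm \<beta>\<^sub>1 z\<^sub>1"
  define p where "p = v + s *\<^sub>R sm \<beta>\<^sub>1 z\<^sub>0"
  have "s > 0" "r \<le> 2 * s" using r \<mu> by (simp_all add: s_def)
  have "0 \<le> \<epsilon>" using comb r(1) by (smt (verit) norm_ge_zero zero_le_mult_iff)
  have "0 \<le> \<epsilon>'" using G_near(1) norm_ge_zero order_trans by blast
  note shift = Re_nonexpansive_image_shift[OF dualD(1)[OF ys(1)] ys(2) T]
  have "norm (u - w) \<le> r * \<epsilon> + r * (1 - \<mu>)"
  proof -
    have eq: "u - w = ((u - v) - r *\<^sub>R (\<mu> *\<^sub>R sm \<beta>\<^sub>1 z\<^sub>1 + (1 - \<mu>) *\<^sub>R sm \<beta>\<^sub>2 z\<^sub>2)) + (r * (1 - \<mu>)) *\<^sub>R sm \<beta>\<^sub>2 z\<^sub>2"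
      by (simp add: w_def s_def algebra_simps)
    have "norm (u - w) \<le> norm ((u - v) - r *\<^sub>R (\<mu> *\<^sub>R sm \<beta>\<^sub>1 z\<^sub>1 + (1 - \<mu>) *\<^sub>R sm \<beta>\<^sub>2 z\<^sub>2))
        + norm ((r * (1 - \<mu>)) *\<^sub>R sm \<beta>\<^sub>2 z\<^sub>2)"
      unfolding eq by (rule norm_triangle_ineq)
    moreover have "norm ((r * (1 - \<mu>)) *\<^sub>R sm \<beta>\<^sub>2 z\<^sub>2) \<le> r * (1 - \<mu>)"
      using norm_sm_unimod[OF ss \<beta>(2)] z(2) r(1) \<mu>(2) by (simp add: mult_left_le)
    ultimately show ?thesis using comb by linarith
  qed
  moreover have "norm (w - p) \<le> s * \<epsilon>'"
  proof -
    have "w - p = s *\<^sub>R sm \<beta>\<^sub>1 (z\<^sub>1 - z\<^sub>0)" by (simp add: w_def p_def sm_diff[OF ss] algebra_simps)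
    then show ?thesis
      using norm_sm_unimod[OF ss \<beta>(1)] G_near(1) \<open>s > 0\<close> by (simp add: norm_minus_commute)
  qed
  ultimately have "s - 6 * s * \<epsilon> - s * \<epsilon>' \<le> Re (ys (T p - T v))"
    using stretched shift[of u v w] shift[of w v p] \<open>r \<le> 2 * s\<close> \<open>0 \<le> \<epsilon>\<close>
      mult_right_mono[OF \<open>r \<le> 2 * s\<close> \<open>0 \<le> \<epsilon>\<close>]
    by (simp add: s_def algebra_simps)
  moreover have "p - v = s *\<^sub>R sm \<beta>\<^sub>1 z\<^sub>0" by (simp add: p_def)
  then have "norm (p - v) = s" using norm_sm_unimod[OF ss \<beta>(1)] G(4) \<open>s > 0\<close> by simp
  then have "cmod (G (T p - T v) - ys (T p - T v)) \<le> \<epsilon>' * s"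
    using G_near(2)[of "T p - T v"] mult_left_mono[OF T[of p v] \<open>0 \<le> \<epsilon>'\<close>] by simp
  ultimately have "s * (1 - 6 * \<epsilon> - 2 * \<epsilon>') \<le> cmod (G (T p - T v))"
    using complex_Re_le_cmod[of "ys (T p - T v)"] norm_triangle_ineq2[of "ys (T p - T v)" "G (T p - T v)"]
    by (simp add: algebra_simps norm_minus_commute)
  define F where "F y = (complex_of_real s * cnj \<beta>\<^sub>1) * G y" for y
  have "F \<in> Dset K sm (p - v)"
    unfolding F_def[abs_def] \<open>p - v = s *\<^sub>R sm \<beta>\<^sub>1 z\<^sub>0\<close>
    by (rule rotated_norming_functional_in_Dset[OF ss G \<beta>(1) \<open>s > 0\<close>])
  moreover have "cmod (F (T p - T v)) / (norm (p - v))\<^sup>2 = cmod (G (T p - T v)) / s"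
    using unimodD(2)[OF \<beta>(1)] \<open>norm (p - v) = s\<close> \<open>s > 0\<close> by (simp add: F_def norm_mult power2_eq_square)
  moreover have "p \<noteq> v" using \<open>norm (p - v) = s\<close> \<open>s > 0\<close> by auto
  ultimately show ?thesis
    using \<open>s * (1 - 6 * \<epsilon> - 2 * \<epsilon>') \<le> cmod (G (T p - T v))\<close> \<open>s > 0\<close>
    by (intro exI[of _ p] exI[of _ v] exI[of _ F]) (simp add: le_divide_eq mult.commute)
qed

lemma Re_ge_of_normalized_in_slice:
  assumes ys: "bounded_linear ys" and "w \<noteq> 0" and slice: "(1 / norm w) *\<^sub>R w \<in> slice ys \<epsilon>"
    and "(1 - \<epsilon>) * r \<le> norm w" "0 \<le> r" "\<epsilon> \<le> 1"
  shows "r * (1 - 2 * \<epsilon>) \<le> Re (ys w)"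
proof -
  have "((1 - \<epsilon>) * r) * (1 - \<epsilon>) = r * (1 - 2 * \<epsilon>) + r * \<epsilon>\<^sup>2" by (simp add: algebra_simps power2_eq_square)
  then have "r * (1 - 2 * \<epsilon>) \<le> ((1 - \<epsilon>) * r) * (1 - \<epsilon>)" using \<open>0 \<le> r\<close> by simp
  also have "\<dots> \<le> norm w * (1 - \<epsilon>)" using assms(4,6) by (intro mult_right_mono) auto
  also have "\<dots> \<le> norm w * Re (ys ((1 / norm w) *\<^sub>R w))"
    using slice by (intro mult_left_mono) (auto simp: slice_def)
  also have "\<dots> = Re (ys w)"
    using linear_scale[OF bounded_linear.linear[OF ys], of "1 / norm w" w] \<open>w \<noteq> 0\<close> by simp
  finally show ?thesis .
qed

lemma join_lush_stretched_pair:
  fixes T :: "'a::real_normed_vector \<Rightarrow> 'a"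
  assumes jl: "join_lush K sm" and "u \<noteq> v" and stretch: "(1 - \<epsilon>) * norm (u - v) < norm (T u - T v)"
    and "0 < \<epsilon>" "\<epsilon> \<le> 1/4"
  obtains ys x\<^sub>1 x\<^sub>2 \<mu> \<beta>\<^sub>1 \<beta>\<^sub>2 where "ys \<in> dual K sm" "onorm ys = 1" "x\<^sub>1 \<in> slice ys \<epsilon>" "x\<^sub>2 \<in> slice ys \<epsilon>"
    "1/2 \<le> \<mu>" "\<mu> \<le> 1" "\<beta>\<^sub>1 \<in> unimod K" "\<beta>\<^sub>2 \<in> unimod K"
    "norm (u - v) * (1 - 2 * \<epsilon>) \<le> Re (ys (T u - T v))"
    "norm ((u - v) - norm (u - v) *\<^sub>R (\<mu> *\<^sub>R sm \<beta>\<^sub>1 x\<^sub>1 + (1 - \<mu>) *\<^sub>R sm \<beta>\<^sub>2 x\<^sub>2)) \<le> norm (u - v) * \<epsilon>"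
proof -
  define r where "r = norm (u - v)"
  have "r > 0" using \<open>u \<noteq> v\<close> by (simp add: r_def)
  have "0 < (1 - \<epsilon>) * r" using \<open>\<epsilon> \<le> 1/4\<close> \<open>r > 0\<close> by simp
  then have "T u - T v \<noteq> 0" using stretch unfolding r_def by auto
  have "norm ((1 / r) *\<^sub>R (u - v)) = 1" "norm ((1 / norm (T u - T v)) *\<^sub>R (T u - T v)) = 1"
    using \<open>r > 0\<close> \<open>T u - T v \<noteq> 0\<close> by (simp_all add: r_def)
  then obtain ys x\<^sub>1 x\<^sub>2 \<mu> \<beta>\<^sub>1 \<beta>\<^sub>2 where ys: "ys \<in> dual K sm" "onorm ys = 1"
    and y_slice: "(1 / norm (T u - T v)) *\<^sub>R (T u - T v) \<in> slice ys \<epsilon>"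
    and x: "x\<^sub>1 \<in> slice ys \<epsilon>" "x\<^sub>2 \<in> slice ys \<epsilon>" "1/2 \<le> \<mu>" "\<mu> \<le> 1" "\<beta>\<^sub>1 \<in> unimod K" "\<beta>\<^sub>2 \<in> unimod K"
    and comb: "norm ((1 / r) *\<^sub>R (u - v) - (\<mu> *\<^sub>R sm \<beta>\<^sub>1 x\<^sub>1 + (1 - \<mu>) *\<^sub>R sm \<beta>\<^sub>2 x\<^sub>2)) < \<epsilon>"
    using join_lush_weight_ge_half[OF jl _ _ \<open>0 < \<epsilon>\<close>] by blast
  have "r * (1 - 2 * \<epsilon>) \<le> Re (ys (T u - T v))"
    using Re_ge_of_normalized_in_slice[OF dualD(1)[OF ys(1)] \<open>T u - T v \<noteq> 0\<close> y_slice] stretch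
      \<open>r > 0\<close> \<open>\<epsilon> \<le> 1/4\<close> by (simp add: r_def)
  moreover have "(u - v) - r *\<^sub>R (\<mu> *\<^sub>R sm \<beta>\<^sub>1 x\<^sub>1 + (1 - \<mu>) *\<^sub>R sm \<beta>\<^sub>2 x\<^sub>2)
      = r *\<^sub>R ((1 / r) *\<^sub>R (u - v) - (\<mu> *\<^sub>R sm \<beta>\<^sub>1 x\<^sub>1 + (1 - \<mu>) *\<^sub>R sm \<beta>\<^sub>2 x\<^sub>2))"
    using \<open>r > 0\<close> by (simp add: algebra_simps)
  then have "norm ((u - v) - r *\<^sub>R (\<mu> *\<^sub>R sm \<beta>\<^sub>1 x\<^sub>1 + (1 - \<mu>) *\<^sub>R sm \<beta>\<^sub>2 x\<^sub>2)) \<le> r * \<epsilon>"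
    using comb \<open>r > 0\<close> by simp
  ultimately show ?thesis using that ys x by (simp add: r_def)
qed

lemma omega_quotient_approx:
  fixes T :: "'a::banach \<Rightarrow> 'a"
  assumes ss: "scalar_setting K sm" and jl: "join_lush K sm"
    and T: "\<And>a b. norm (T a - T b) \<le> norm (a - b)"
    and T_attains: "\<And>\<epsilon>. \<epsilon> > 0 \<Longrightarrow> \<exists>u v. u \<noteq> v \<and> (1 - \<epsilon>) * norm (u - v) < norm (T u - T v)"
    and "0 < \<delta>"
  shows "\<exists>p q F. p \<noteq> q \<and> F \<in> Dset K sm (p - q) \<and> 1 - \<delta> < cmod (F (T p - T q)) / (norm (p - q))\<^sup>2"
proof -
  define \<epsilon>' where "\<epsilon>' = \<delta> / 4"
  have "0 < \<epsilon>'" using \<open>0 < \<delta>\<close> by (simp add: \<epsilon>'_def)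
  obtain \<eta> where "\<eta> > 0" and bpb: "\<And>h x. h \<in> dual K sm \<Longrightarrow> (\<And>z. cmod (h z) \<le> norm z) \<Longrightarrow>
      norm x \<le> 1 \<Longrightarrow> 1 - \<eta> < Re (h x) \<Longrightarrow>
      \<exists>G z. G \<in> dual K sm \<and> onorm G = 1 \<and> G z = 1 \<and> norm z = 1 \<and> norm (z - x) \<le> \<epsilon>'
        \<and> (\<forall>y. cmod (G y - h y) \<le> \<epsilon>' * norm y)"
    using bishop_phelps_bollobas[OF ss \<open>0 < \<epsilon>'\<close>] by blast
  define \<epsilon> where "\<epsilon> = min (min \<eta> (\<delta> / 48)) (1/4)"
  have "\<epsilon> > 0" "\<epsilon> \<le> \<eta>" "\<epsilon> \<le> \<delta> / 48" "\<epsilon> \<le> 1/4"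
    using \<open>\<eta> > 0\<close> \<open>0 < \<delta>\<close> by (auto simp: \<epsilon>_def)
  obtain u v where "u \<noteq> v" "(1 - \<epsilon>) * norm (u - v) < norm (T u - T v)"
    using T_attains[OF \<open>\<epsilon> > 0\<close>] by blast
  then obtain ys x\<^sub>1 x\<^sub>2 \<mu> \<beta>\<^sub>1 \<beta>\<^sub>2 where ys: "ys \<in> dual K sm" "onorm ys = 1"
    and x_slice: "x\<^sub>1 \<in> slice ys \<epsilon>" "x\<^sub>2 \<in> slice ys \<epsilon>" and \<mu>: "1/2 \<le> \<mu>" "\<mu> \<le> 1"
    and \<beta>: "\<beta>\<^sub>1 \<in> unimod K" "\<beta>\<^sub>2 \<in> unimod K"
    and stretched: "norm (u - v) * (1 - 2 * \<epsilon>) \<le> Re (ys (T u - T v))"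
    and comb: "norm ((u - v) - norm (u - v) *\<^sub>R (\<mu> *\<^sub>R sm \<beta>\<^sub>1 x\<^sub>1 + (1 - \<mu>) *\<^sub>R sm \<beta>\<^sub>2 x\<^sub>2))
      \<le> norm (u - v) * \<epsilon>"
    using join_lush_stretched_pair[OF jl _ _ \<open>\<epsilon> > 0\<close> \<open>\<epsilon> \<le> 1/4\<close>] by blast
  have ys_le: "cmod (ys z) \<le> norm z" for z using onorm[OF dualD(1)[OF ys(1)], of z] ys(2) by simp
  have x\<^sub>1: "norm x\<^sub>1 \<le> 1" "1 - \<eta> < Re (ys x\<^sub>1)" and "norm x\<^sub>2 \<le> 1"
    using x_slice \<open>\<epsilon> \<le> \<eta>\<close> by (auto simp: slice_def)
  obtain G z\<^sub>0 where G: "G \<in> dual K sm" "onorm G = 1" "G z\<^sub>0 = 1" "norm z\<^sub>0 = 1"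
    "norm (z\<^sub>0 - x\<^sub>1) \<le> \<epsilon>'" "\<And>y. cmod (G y - ys y) \<le> \<epsilon>' * norm y"
    using bpb[OF ys(1) ys_le x\<^sub>1] by blast
  have "0 < norm (u - v)" using \<open>u \<noteq> v\<close> by simp
  obtain p q F where "p \<noteq> q" "F \<in> Dset K sm (p - q)"
    "1 - 6 * \<epsilon> - 2 * \<epsilon>' \<le> cmod (F (T p - T q)) / (norm (p - q))\<^sup>2"
    using join_lush_Dset_witness[OF ss T ys(1) ys_le \<open>0 < norm (u - v)\<close> refl stretched \<mu> \<beta>
        x\<^sub>1(1) \<open>norm x\<^sub>2 \<le> 1\<close> comb G] by blast
  moreover have "1 - \<delta> < 1 - 6 * \<epsilon> - 2 * \<epsilon>'" using \<open>\<epsilon> \<le> \<delta> / 48\<close> \<open>0 < \<delta>\<close> by (simp add: \<epsilon>'_def)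
  ultimately show ?thesis by fastforce
qed

lemma omega_eq_1:
  fixes T :: "'a::banach \<Rightarrow> 'a"
  assumes ss: "scalar_setting K sm" and "\<exists>x::'a. x \<noteq> 0" and jl: "join_lush K sm"
    and "T \<in> Lip0" "lip_norm T = 1"
  shows "omega K sm T = 1"
proof -
  define W where "W = {cmod (f (T x - T y)) / (norm (x - y))\<^sup>2 | x y f. x \<noteq> y \<and> f \<in> Dset K sm (x - y)}"
  note T = lip_norm_eq_1_nonexpansive[OF assms(4,2,5)]
  have W_le: "w \<le> 1" if "w \<in> W" for w
    using that omega_quotient_le_1[OF T] unfolding W_def by blast
  have W_approx: "\<exists>w\<in>W. 1 - \<delta> < w" if "\<delta> > 0" for \<delta>
    using omega_quotient_approx[OF ss jl T lip_norm_eq_1_almost_attained[OF assms(4,2,5)] that]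
    by (auto simp: W_def)
  have "Sup W = 1"
  proof (rule antisym)
    show "Sup W \<le> 1" using W_le W_approx[of 1] by (intro cSup_least) auto
    show "1 \<le> Sup W"
    proof (rule ccontr)
      assume "\<not> 1 \<le> Sup W"
      then obtain w where "w \<in> W" "Sup W < w" using W_approx[of "1 - Sup W"] by auto
      moreover have "bdd_above W" using W_le by (intro bdd_aboveI) blast
      ultimately show False using cSup_upper[of w W] by simp
    qed
  qed
  then show ?thesis by (simp add: omega_def W_def)
qed

lemma id_in_Lip0: "id \<in> Lip0"
  using lipschitz_on_id by (auto simp: Lip0_def id_def)

lemma lip_norm_id:
  assumes "\<exists>x::'a::real_normed_vector. x \<noteq> 0"
  shows "lip_norm (id :: 'a \<Rightarrow> 'a) = 1"
proof -
  obtain x\<^sub>0 :: 'a where "x\<^sub>0 \<noteq> 0" using assms by blast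
  then have "{norm (id x - id y) / norm (x - y) | x y :: 'a. x \<noteq> y} = {1}" by force
  then show ?thesis by (simp add: lip_norm_def)
qed

theorem mainTheorem7:
  fixes K :: "complex set" and sm :: "complex \<Rightarrow> 'a::banach \<Rightarrow> 'a"
  assumes "scalar_setting K sm"
    and "\<exists>x::'a. x \<noteq> 0"
    and "join_lush K sm"
  shows "nL K sm = 1"
proof -
  have "{omega K sm T | T. T \<in> Lip0 \<and> lip_norm T = 1} = {1}"
    using omega_eq_1[OF assms] id_in_Lip0 lip_norm_id[OF assms(2)] by (auto intro!: exI[of _ id])
  then show ?thesis by (simp add: nL_def)
qed

end
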